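(* Let $Z(x_+)$ be an $N\times M$ complex matrix (of rank $M$) whose entries are holomorphic functions of $x_+$, defining a holomorphic solution $Z:S^2\to G(M,N)$ of the bosonic grassmannian $G(M,N)$ sigma model, and suppose the associated surface has constant Gaussian curvature, i.e. with $g=\partial_+\partial_-\ln\det(Z^\dagger Z)$ one has $\kappa:=-\frac{1}{g}\partial_+\partial_-\ln g$ equal to a constant. Let $\eta(x_+)$ be a fermionic (Grassmann-odd) function of $x_+$, let $\theta_+$ be a Grassmann-odd coordinate, and consider the supersymmetric invariant holomorphic extension $$W(x_+,\theta_+)=Z(x_+)+i\theta_+\eta(x_+)\,\partial_+Z(x_+).$$ Define the supersymmetric metric $\tilde g=\partial_+\partial_-\ln\det(W^\dagger W)$ and the supersymmetric Gaussian curvature $\tilde\kappa=-\frac{1}{\tilde g}\partial_+\partial_-\ln\tilde g$. Then $\tilde\kappa$ is constant and $\tilde\kappa=\kappa$.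
   Context: The superspace has bosonic coordinates $x_\pm$ ($x_-$ the complex conjugate of $x_+$, bosonic part compactified to $S^2$) and anticommuting Grassmann coordinates $\theta_\pm$; $\partial_\pm=\partial/\partial x_\pm$. Conjugation $\dagger$ sends functions of $(x_+,\theta_+)$ to functions of $(x_-,\theta_-)$, with $\eta^\dagger=\eta^\dagger(x_-)$. The grassmannian $G(M,N)$ is the space of $M$-dimensional subspaces of $\mathbb{C}^N$; a holomorphic solution of the bosonic $G(M,N)$ sigma model is given (up to gauge) by an $N\times M$ matrix $Z(x_+)$ depending holomorphically on $x_+$ only, the map being its column span. Functions of Grassmann variables are expanded as finite polynomials in $\theta_\pm$, and $\ln$ is defined by the (terminating) Taylor expansion in the nilpotent parts. *)

theory Defs
  imports "HOL-Analysis.Analysis" "HOL-Combinatorics.Permutations"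
begin

section \<open>Wirtinger derivatives on the plane (x_+ = z, x_- = cnj z)\<close>

definition wirt_p :: "(complex \<Rightarrow> complex) \<Rightarrow> complex \<Rightarrow> complex" where
  "wirt_p f z = (frechet_derivative f (at z) 1 - \<i> * frechet_derivative f (at z) \<i>) / 2"

definition wirt_m :: "(complex \<Rightarrow> complex) \<Rightarrow> complex \<Rightarrow> complex" where
  "wirt_m f z = (frechet_derivative f (at z) 1 + \<i> * frechet_derivative f (at z) \<i>) / 2"

definition wirt_pm :: "(complex \<Rightarrow> complex) \<Rightarrow> complex \<Rightarrow> complex" where
  "wirt_pm f = wirt_p (wirt_m f)"

text \<open>An element is given by its coefficients: the coefficient of the monomial
 xi_{a1} ... xi_{ak} (a1 < ... < ak) is stored at the set {a1,...,ak}.\<close>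

type_synonym 'g grass = "'g set \<Rightarrow> complex"

definition gconst :: "complex \<Rightarrow> 'g grass" where
  "gconst c = (\<lambda>S. if S = {} then c else 0)"

definition gen :: "'g \<Rightarrow> 'g grass" where
  "gen a = (\<lambda>S. if S = {a} then 1 else 0)"

definition gbody :: "'g grass \<Rightarrow> complex" where
  "gbody x = x {}"

definition gadd :: "'g grass \<Rightarrow> 'g grass \<Rightarrow> 'g grass" where
  "gadd x y = (\<lambda>S. x S + y S)"

definition gscale :: "complex \<Rightarrow> 'g grass \<Rightarrow> 'g grass" where
  "gscale c x = (\<lambda>S. c * x S)"

definition gsum :: "('i \<Rightarrow> 'g grass) \<Rightarrow> 'i set \<Rightarrow> 'g grass" where
  "gsum f A = (\<lambda>S. \<Sum>i\<in>A. f i S)"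

text \<open>sign of xi_A xi_B = sgn * xi_{A \<union> B} for disjoint A, B\<close>
definition merge_sign :: "'g::linorder set \<Rightarrow> 'g set \<Rightarrow> complex" where
  "merge_sign A B = (-1) ^ card {(a, b). a \<in> A \<and> b \<in> B \<and> b < a}"

definition gmul :: "'g::linorder grass \<Rightarrow> 'g grass \<Rightarrow> 'g grass" where
  "gmul x y = (\<lambda>S. \<Sum>A\<in>Pow S. merge_sign A (S - A) * x A * y (S - A))"

definition gpow :: "'g::linorder grass \<Rightarrow> nat \<Rightarrow> 'g grass" where
  "gpow x k = ((gmul x) ^^ k) (gconst 1)"

definition gprod_list :: "'g::linorder grass list \<Rightarrow> 'g grass" where
  "gprod_list xs = foldr gmul xs (gconst 1)"

definition gsoul :: "'g grass \<Rightarrow> 'g grass" where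
  "gsoul x = (\<lambda>S. if S = {} then 0 else x S)"

text \<open>inverse and logarithm by the terminating Taylor expansion in the nilpotent part
 (all products of more than CARD('g) nilpotent elements vanish)\<close>
definition ginv :: "'g::{finite,linorder} grass \<Rightarrow> 'g grass" where
  "ginv x = gsum (\<lambda>k. gscale ((-1) ^ k / gbody x ^ (k + 1)) (gpow (gsoul x) k)) {0..CARD('g)}"

definition gln :: "'g::{finite,linorder} grass \<Rightarrow> 'g grass" where
  "gln x = gadd (gconst (Ln (gbody x)))
     (gsum (\<lambda>k. gscale ((-1) ^ (k + 1) / (of_nat k * gbody x ^ k)) (gpow (gsoul x) k))
       {1..CARD('g)})"

text \<open>Conjugation: antilinear anti-automorphism (ab)^dagger = b^dagger a^dagger,
 acting on generators by the involution sigma (sigma theta_+ = theta_-).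
 (xi_{a1}...xi_{ak})^dagger = xi_{sigma ak} ... xi_{sigma a1}, reordered.\<close>
definition gconj :: "('g::linorder \<Rightarrow> 'g) \<Rightarrow> 'g grass \<Rightarrow> 'g grass" where
  "gconj \<sigma> x = (\<lambda>T. let S = \<sigma> ` T in
      (-1) ^ card {(a, b). a \<in> S \<and> b \<in> S \<and> a < b \<and> \<sigma> a < \<sigma> b} * cnj (x S))"

section \<open>Superfunctions on the superspace: x_+ \<mapsto> Grassmann-valued (coefficients
  are functions of x_+, x_- = cnj x_+; theta_\<plusminus> are generators)\<close>

definition sd_p :: "(complex \<Rightarrow> 'g grass) \<Rightarrow> complex \<Rightarrow> 'g grass" where
  "sd_p F z = (\<lambda>S. wirt_p (\<lambda>w. F w S) z)"

definition sd_m :: "(complex \<Rightarrow> 'g grass) \<Rightarrow> complex \<Rightarrow> 'g grass" where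
  "sd_m F z = (\<lambda>S. wirt_m (\<lambda>w. F w S) z)"

definition sd_pm :: "(complex \<Rightarrow> 'g grass) \<Rightarrow> complex \<Rightarrow> 'g grass" where
  "sd_pm F = sd_p (sd_m F)"

definition cdet :: "nat \<Rightarrow> (nat \<Rightarrow> nat \<Rightarrow> complex) \<Rightarrow> complex" where
  "cdet m A = (\<Sum>p\<in>{p. p permutes {0..<m}}. of_int (sign p) * (\<Prod>i<m. A i (p i)))"

definition gdet :: "nat \<Rightarrow> (nat \<Rightarrow> nat \<Rightarrow> 'g::linorder grass) \<Rightarrow> 'g grass" where
  "gdet m A = gsum (\<lambda>p. gscale (of_int (sign p)) (gprod_list (map (\<lambda>i. A i (p i)) [0..<m])))
      {p. p permutes {0..<m}}"

text \<open>Z z i j, i < N rows, j < M columns; Z^dagger Z\<close>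
definition ZdZ :: "nat \<Rightarrow> (complex \<Rightarrow> nat \<Rightarrow> nat \<Rightarrow> complex) \<Rightarrow> complex \<Rightarrow> nat \<Rightarrow> nat \<Rightarrow> complex" where
  "ZdZ N Z z i k = (\<Sum>j<N. cnj (Z z j i) * Z z j k)"

definition bos_metric :: "nat \<Rightarrow> nat \<Rightarrow> (complex \<Rightarrow> nat \<Rightarrow> nat \<Rightarrow> complex) \<Rightarrow> complex \<Rightarrow> complex" where
  "bos_metric N M Z = wirt_pm (\<lambda>z. Ln (cdet M (ZdZ N Z z)))"

definition bos_curv :: "nat \<Rightarrow> nat \<Rightarrow> (complex \<Rightarrow> nat \<Rightarrow> nat \<Rightarrow> complex) \<Rightarrow> complex \<Rightarrow> complex" where
  "bos_curv N M Z z = - (wirt_pm (\<lambda>w. Ln (bos_metric N M Z w)) z) / bos_metric N M Z z"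

definition superW :: "'g::linorder \<Rightarrow> (complex \<Rightarrow> 'g grass) \<Rightarrow> (complex \<Rightarrow> nat \<Rightarrow> nat \<Rightarrow> complex)
    \<Rightarrow> complex \<Rightarrow> nat \<Rightarrow> nat \<Rightarrow> 'g grass" where
  "superW \<theta>p \<eta> Z z i j = gadd (gconst (Z z i j))
      (gmul (gscale \<i> (gmul (gen \<theta>p) (\<eta> z))) (gconst (wirt_p (\<lambda>w. Z w i j) z)))"

definition WdW :: "nat \<Rightarrow> ('g::linorder \<Rightarrow> 'g) \<Rightarrow> (complex \<Rightarrow> nat \<Rightarrow> nat \<Rightarrow> 'g grass)
    \<Rightarrow> complex \<Rightarrow> nat \<Rightarrow> nat \<Rightarrow> 'g grass" where
  "WdW N \<sigma> W z i k = gsum (\<lambda>j. gmul (gconj \<sigma> (W z j i)) (W z j k)) {..<N}"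

definition susy_metric :: "nat \<Rightarrow> nat \<Rightarrow> ('g::{finite,linorder} \<Rightarrow> 'g) \<Rightarrow> (complex \<Rightarrow> nat \<Rightarrow> nat \<Rightarrow> 'g grass)
    \<Rightarrow> complex \<Rightarrow> 'g grass" where
  "susy_metric N M \<sigma> W = sd_pm (\<lambda>z. gln (gdet M (WdW N \<sigma> W z)))"

definition susy_curv :: "nat \<Rightarrow> nat \<Rightarrow> ('g::{finite,linorder} \<Rightarrow> 'g) \<Rightarrow> (complex \<Rightarrow> nat \<Rightarrow> nat \<Rightarrow> 'g grass)
    \<Rightarrow> complex \<Rightarrow> 'g grass" where
  "susy_curv N M \<sigma> W z = gscale (-1)
     (gmul (ginv (susy_metric N M \<sigma> W z)) (sd_pm (\<lambda>w. gln (susy_metric N M \<sigma> W w)) z))"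

end

theory Submission
  imports Defs "HOL-Complex_Analysis.Cauchy_Integral_Formula"
begin

text \<open>
  Write \<open>p = i\<theta>\<^sub>+\<eta>\<close> and \<open>q = p\<^sup>\<dagger>\<close>. Since \<open>p\<close> is nilpotent and holomorphic, the extension
  \<open>W = Z + p \<partial>\<^sub>+Z\<close> is the Taylor expansion of \<open>Z\<close> at the shifted point \<open>x\<^sub>+ + p\<close>, and \<open>W\<^sup>\<dagger>\<close> that of
  \<open>Z\<^sup>\<dagger>\<close> at \<open>x\<^sub>- + q\<close>. Hence \<open>det (W\<^sup>\<dagger>W) = D(x\<^sub>+ + p, x\<^sub>- + q)\<close> with \<open>D = det (Z\<^sup>\<dagger>Z)\<close>: every
  quantity is the bosonic one evaluated at the shifted point, up to the chain rule, which
  multiplies \<open>\<partial>\<^sub>+\<partial>\<^sub>-\<close> of a shifted function by \<open>(1 + \<partial>\<^sub>+p)(1 + \<partial>\<^sub>-q)\<close>. So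
  \<open>G = (1 + \<partial>\<^sub>+p)(1 + \<partial>\<^sub>-q) g(x\<^sub>+ + p, x\<^sub>- + q)\<close>, whose logarithm is the shifted \<open>ln g\<close> plus
  \<open>\<partial>\<^sub>+p + \<partial>\<^sub>-q\<close>; the latter are annihilated by \<open>\<partial>\<^sub>+\<partial>\<^sub>-\<close>, so \<open>\<partial>\<^sub>+\<partial>\<^sub>- ln G\<close> is
  \<open>(1 + \<partial>\<^sub>+p)(1 + \<partial>\<^sub>-q)\<close> times the shifted \<open>\<partial>\<^sub>+\<partial>\<^sub>- ln g = -\<kappa> g\<close>, i.e. \<open>-\<kappa> G\<close>.

  The shifted functions are computed on second-order jets: a jet is a polynomial in formal
  nilpotents, into which \<open>p, \<partial>\<^sub>+p, q, \<partial>\<^sub>-q\<close> are substituted by a ring homomorphism.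
\<close>

section \<open>Wirtinger derivatives\<close>

definition has_wirt_deriv :: "(complex \<Rightarrow> complex) \<Rightarrow> complex \<Rightarrow> complex \<Rightarrow> complex \<Rightarrow> bool" where
  "has_wirt_deriv f a b z \<longleftrightarrow> (f has_derivative (\<lambda>h. a * h + b * cnj h)) (at z)"

lemma has_wirt_derivD:
  assumes "has_wirt_deriv f a b z"
  shows "wirt_p f z = a" "wirt_m f z = b"
proof -
  have "frechet_derivative f (at z) = (\<lambda>h. a * h + b * cnj h)"
    using assms frechet_derivative_at unfolding has_wirt_deriv_def by metis
  then show "wirt_p f z = a" "wirt_m f z = b"
    unfolding wirt_p_def wirt_m_def by (simp_all add: algebra_simps)
qed

lemma has_wirt_deriv_imp_differentiable: "has_wirt_deriv f a b z \<Longrightarrow> f differentiable (at z)"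
  unfolding has_wirt_deriv_def differentiable_def by blast

lemma differentiable_imp_has_wirt_deriv:
  assumes "f differentiable (at z)"
  shows "has_wirt_deriv f (wirt_p f z) (wirt_m f z) z"
proof -
  let ?L = "frechet_derivative f (at z)"
  have deriv: "(f has_derivative ?L) (at z)"
    using assms frechet_derivative_works by blast
  then have lin: "linear ?L"
    by (rule has_derivative_linear)
  have "?L h = wirt_p f z * h + wirt_m f z * cnj h" for h
  proof -
    have h: "h = Re h *\<^sub>R 1 + Im h *\<^sub>R \<i>"
      by (simp add: complex_eq_iff)
    have "?L h = Re h *\<^sub>R ?L 1 + Im h *\<^sub>R ?L \<i>"
      by (subst h) (simp add: linear_add[OF lin] linear_scale[OF lin])
    also have "\<dots> = wirt_p f z * h + wirt_m f z * cnj h"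
      unfolding wirt_p_def wirt_m_def
      by (subst (3 4) h) (simp add: scaleR_conv_of_real field_simps)
    finally show ?thesis .
  qed
  with deriv show ?thesis
    unfolding has_wirt_deriv_def by (metis (no_types, lifting) ext)
qed

lemma has_wirt_deriv_const: "has_wirt_deriv (\<lambda>z. c) 0 0 z"
  unfolding has_wirt_deriv_def by (simp add: has_derivative_const)

lemma has_wirt_deriv_add:
  "has_wirt_deriv f a b z \<Longrightarrow> has_wirt_deriv g c d z \<Longrightarrow>
    has_wirt_deriv (\<lambda>z. f z + g z) (a + c) (b + d) z"
  unfolding has_wirt_deriv_def by (auto dest: has_derivative_add simp: algebra_simps)

lemma has_wirt_deriv_mult:
  "has_wirt_deriv f a b z \<Longrightarrow> has_wirt_deriv g c d z \<Longrightarrow>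
    has_wirt_deriv (\<lambda>z. f z * g z) (a * g z + f z * c) (b * g z + f z * d) z"
  unfolding has_wirt_deriv_def by (drule (1) has_derivative_mult) (simp add: algebra_simps)

lemma has_wirt_deriv_cmult:
  "has_wirt_deriv f a b z \<Longrightarrow> has_wirt_deriv (\<lambda>z. c * f z) (c * a) (c * b) z"
  using has_wirt_deriv_mult[OF has_wirt_deriv_const] by fastforce

lemma has_wirt_deriv_uminus:
  "has_wirt_deriv f a b z \<Longrightarrow> has_wirt_deriv (\<lambda>z. - f z) (- a) (- b) z"
  using has_wirt_deriv_cmult[of f a b z "-1"] by simp

lemma has_wirt_deriv_sum:
  "finite A \<Longrightarrow> (\<And>i. i \<in> A \<Longrightarrow> has_wirt_deriv (f i) (a i) (b i) z) \<Longrightarrow>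
    has_wirt_deriv (\<lambda>z. \<Sum>i\<in>A. f i z) (\<Sum>i\<in>A. a i) (\<Sum>i\<in>A. b i) z"
  by (induction A rule: finite_induct) (auto intro: has_wirt_deriv_add has_wirt_deriv_const[of 0, simplified])

lemma has_wirt_deriv_cnj:
  "has_wirt_deriv f a b z \<Longrightarrow> has_wirt_deriv (\<lambda>z. cnj (f z)) (cnj b) (cnj a) z"
  unfolding has_wirt_deriv_def by (drule has_derivative_cnj) (simp add: algebra_simps)

lemma has_field_derivative_imp_has_wirt_deriv:
  "(f has_field_derivative a) (at z) \<Longrightarrow> has_wirt_deriv f a 0 z"
proof -
  assume "(f has_field_derivative a) (at z)"
  moreover have "(\<lambda>h. a * h + 0 * cnj h) = (*) a"
    by auto
  ultimately show ?thesis
    unfolding has_wirt_deriv_def has_field_derivative_def by simp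
qed

lemma has_wirt_deriv_compose:
  "(g has_field_derivative d) (at (f z)) \<Longrightarrow> has_wirt_deriv f a b z \<Longrightarrow>
    has_wirt_deriv (\<lambda>z. g (f z)) (d * a) (d * b) z"
  unfolding has_wirt_deriv_def has_field_derivative_def
  by (drule (1) has_derivative_compose[where g = g, rotated]) (simp add: algebra_simps)

lemma has_wirt_deriv_inverse:
  assumes "has_wirt_deriv f a b z" "f z \<noteq> 0"
  shows "has_wirt_deriv (\<lambda>z. inverse (f z)) (- a / (f z)\<^sup>2) (- b / (f z)\<^sup>2) z"
  using has_wirt_deriv_compose[OF DERIV_inverse[OF assms(2)] assms(1)]
  by (simp add: field_simps power2_eq_square)

lemma has_wirt_deriv_Ln:
  "has_wirt_deriv f a b z \<Longrightarrow> f z \<notin> \<real>\<^sub>\<le>\<^sub>0 \<Longrightarrow>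
    has_wirt_deriv (\<lambda>z. Ln (f z)) (a / f z) (b / f z) z"
  using has_wirt_deriv_compose[of Ln "inverse (f z)" f z a b] has_field_derivative_Ln
  by (auto simp: field_simps)

lemma holomorphic_imp_has_wirt_deriv:
  "f holomorphic_on UNIV \<Longrightarrow> has_wirt_deriv f (deriv f z) 0 z"
  by (intro has_field_derivative_imp_has_wirt_deriv holomorphic_derivI[of f UNIV]) auto

lemma wirt_holomorphic:
  assumes "f holomorphic_on UNIV"
  shows "wirt_p f = deriv f" "wirt_m f = (\<lambda>z. 0)"
  using has_wirt_derivD[OF holomorphic_imp_has_wirt_deriv[OF assms]] by auto

lemma wirt_const [simp]: "wirt_p (\<lambda>z. c) = (\<lambda>z. 0)" "wirt_m (\<lambda>z. c) = (\<lambda>z. 0)"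
  using has_wirt_derivD[OF has_wirt_deriv_const] by auto

lemma wirt_add:
  assumes "f differentiable (at z)" "g differentiable (at z)"
  shows "wirt_p (\<lambda>z. f z + g z) z = wirt_p f z + wirt_p g z"
    "wirt_m (\<lambda>z. f z + g z) z = wirt_m f z + wirt_m g z"
  using has_wirt_derivD[OF has_wirt_deriv_add[OF assms[THEN differentiable_imp_has_wirt_deriv]]] by auto

lemma wirt_uminus:
  assumes "f differentiable (at z)"
  shows "wirt_p (\<lambda>z. - f z) z = - wirt_p f z" "wirt_m (\<lambda>z. - f z) z = - wirt_m f z"
  using has_wirt_derivD[OF has_wirt_deriv_uminus[OF differentiable_imp_has_wirt_deriv[OF assms]]]
  by auto

lemma wirt_mult:
  assumes "f differentiable (at z)" "g differentiable (at z)"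
  shows "wirt_p (\<lambda>z. f z * g z) z = wirt_p f z * g z + f z * wirt_p g z"
    "wirt_m (\<lambda>z. f z * g z) z = wirt_m f z * g z + f z * wirt_m g z"
  using has_wirt_derivD[OF has_wirt_deriv_mult[OF assms[THEN differentiable_imp_has_wirt_deriv]]] by auto

lemma wirt_inverse:
  assumes "f differentiable (at z)" "f z \<noteq> 0"
  shows "wirt_p (\<lambda>z. inverse (f z)) z = - wirt_p f z / (f z)\<^sup>2"
    "wirt_m (\<lambda>z. inverse (f z)) z = - wirt_m f z / (f z)\<^sup>2"
  using has_wirt_derivD[OF has_wirt_deriv_inverse[OF differentiable_imp_has_wirt_deriv[OF assms(1)] assms(2)]]
  by auto

lemma wirt_divide:
  assumes "f differentiable (at z)" "g differentiable (at z)" "g z \<noteq> 0"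
  shows "wirt_p (\<lambda>z. f z / g z) z = wirt_p f z / g z - f z * wirt_p g z / (g z)\<^sup>2"
    "wirt_m (\<lambda>z. f z / g z) z = wirt_m f z / g z - f z * wirt_m g z / (g z)\<^sup>2"
proof -
  have "(\<lambda>z. f z / g z) = (\<lambda>z. f z * inverse (g z))"
    by (rule ext) (rule divide_inverse)
  moreover have "has_wirt_deriv (\<lambda>z. f z * inverse (g z))
      (wirt_p f z * inverse (g z) + f z * (- wirt_p g z / (g z)\<^sup>2))
      (wirt_m f z * inverse (g z) + f z * (- wirt_m g z / (g z)\<^sup>2)) z"
    using assms by (intro has_wirt_deriv_mult has_wirt_deriv_inverse differentiable_imp_has_wirt_deriv)
  ultimately show "wirt_p (\<lambda>z. f z / g z) z = wirt_p f z / g z - f z * wirt_p g z / (g z)\<^sup>2"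
    "wirt_m (\<lambda>z. f z / g z) z = wirt_m f z / g z - f z * wirt_m g z / (g z)\<^sup>2"
    using has_wirt_derivD by (simp_all add: divide_inverse)
qed

lemma wirt_cnj:
  assumes "f differentiable (at z)"
  shows "wirt_p (\<lambda>z. cnj (f z)) z = cnj (wirt_m f z)" "wirt_m (\<lambda>z. cnj (f z)) z = cnj (wirt_p f z)"
  using has_wirt_derivD[OF has_wirt_deriv_cnj[OF differentiable_imp_has_wirt_deriv[OF assms]]] by auto

section \<open>Smooth functions\<close>

text \<open>The symmetry of mixed Wirtinger derivatives is part of the definition; instead of a
  Schwarz theorem we show that it is preserved by every operation used.\<close>

primrec smooth_upto :: "nat \<Rightarrow> (complex \<Rightarrow> complex) \<Rightarrow> bool" where
  "smooth_upto 0 f = True"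
| "smooth_upto (Suc n) f \<longleftrightarrow> (\<forall>z. f differentiable (at z)) \<and>
     smooth_upto n (wirt_p f) \<and> smooth_upto n (wirt_m f) \<and>
     (n > 0 \<longrightarrow> wirt_p (wirt_m f) = wirt_m (wirt_p f))"

definition smooth :: "(complex \<Rightarrow> complex) \<Rightarrow> bool" where
  "smooth f \<longleftrightarrow> (\<forall>n. smooth_upto n f)"

lemma smooth_upto_SucI:
  assumes "\<And>z. has_wirt_deriv f (a z) (b z) z" "smooth_upto n a" "smooth_upto n b"
    "n > 0 \<Longrightarrow> wirt_p b = wirt_m a"
  shows "smooth_upto (Suc n) f"
proof -
  have wirt: "wirt_p f = a" "wirt_m f = b"
    using has_wirt_derivD[OF assms(1)] by auto
  have "\<forall>z. f differentiable (at z)"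
    using assms(1) has_wirt_deriv_imp_differentiable by blast
  then show ?thesis
    unfolding smooth_upto.simps wirt using assms(2-4) by blast
qed

lemma smooth_upto_SucD:
  assumes "smooth_upto (Suc n) f"
  shows "f differentiable (at z)" "smooth_upto n (wirt_p f)" "smooth_upto n (wirt_m f)"
  using assms by simp_all

lemma smooth_upto_Suc_SucD:
  assumes "smooth_upto (Suc (Suc n)) f"
  shows "wirt_p f differentiable (at z)" "wirt_m f differentiable (at z)"
    "wirt_m (wirt_p f) = wirt_p (wirt_m f)"
proof -
  show "wirt_p f differentiable (at z)" "wirt_m f differentiable (at z)"
    using assms smooth_upto_SucD by blast+
  have "0 < Suc n \<longrightarrow> wirt_p (wirt_m f) = wirt_m (wirt_p f)"
    using assms unfolding smooth_upto.simps(2)[of "Suc n"] by blast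
  then show "wirt_m (wirt_p f) = wirt_p (wirt_m f)"
    by simp
qed

lemma smooth_upto_Suc_imp: "smooth_upto (Suc n) f \<Longrightarrow> smooth_upto n f"
proof (induction n arbitrary: f)
  case (Suc n)
  then have "smooth_upto n (wirt_p f)" "smooth_upto n (wirt_m f)"
    using smooth_upto_SucD by blast+
  then show ?case
    unfolding smooth_upto.simps(2)
    using smooth_upto_SucD(1) smooth_upto_Suc_SucD(3) Suc.prems by metis
qed simp

lemma smooth_upto_const: "smooth_upto n (\<lambda>z. c)"
  by (induction n arbitrary: c) simp_all

lemma smooth_upto_add:
  "smooth_upto n f \<Longrightarrow> smooth_upto n g \<Longrightarrow> smooth_upto n (\<lambda>z. f z + g z)"
proof (induction n arbitrary: f g)
  case (Suc n)
  show ?case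
  proof (rule smooth_upto_SucI)
    show "has_wirt_deriv (\<lambda>z. f z + g z) (wirt_p f z + wirt_p g z) (wirt_m f z + wirt_m g z) z" for z
      using Suc.prems by (intro has_wirt_deriv_add differentiable_imp_has_wirt_deriv smooth_upto_SucD)
    show "smooth_upto n (\<lambda>z. wirt_p f z + wirt_p g z)" "smooth_upto n (\<lambda>z. wirt_m f z + wirt_m g z)"
      using Suc.IH smooth_upto_SucD[OF Suc.prems(1)] smooth_upto_SucD[OF Suc.prems(2)] by blast+
    assume "n > 0"
    then obtain k where k: "n = Suc k" by (cases n) auto
    have f: "smooth_upto (Suc (Suc k)) f" and g: "smooth_upto (Suc (Suc k)) g"
      using Suc.prems unfolding k .
    show "wirt_p (\<lambda>z. wirt_m f z + wirt_m g z) = wirt_m (\<lambda>z. wirt_p f z + wirt_p g z)"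
      using smooth_upto_SucD(1)[OF f] smooth_upto_SucD(1)[OF g]
        smooth_upto_Suc_SucD[OF f] smooth_upto_Suc_SucD[OF g] by (simp add: wirt_add fun_eq_iff)
  qed
qed simp

lemma smooth_upto_mult:
  "smooth_upto n f \<Longrightarrow> smooth_upto n g \<Longrightarrow> smooth_upto n (\<lambda>z. f z * g z)"
proof (induction n arbitrary: f g)
  case (Suc n)
  have f: "smooth_upto n f" "smooth_upto n (wirt_p f)" "smooth_upto n (wirt_m f)"
    using Suc.prems(1) smooth_upto_Suc_imp smooth_upto_SucD by blast+
  have g: "smooth_upto n g" "smooth_upto n (wirt_p g)" "smooth_upto n (wirt_m g)"
    using Suc.prems(2) smooth_upto_Suc_imp smooth_upto_SucD by blast+
  show ?case
  proof (rule smooth_upto_SucI)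
    show "has_wirt_deriv (\<lambda>z. f z * g z)
        (wirt_p f z * g z + f z * wirt_p g z) (wirt_m f z * g z + f z * wirt_m g z) z" for z
      using Suc.prems
      by (intro has_wirt_deriv_mult differentiable_imp_has_wirt_deriv smooth_upto_SucD)
    show "smooth_upto n (\<lambda>z. wirt_p f z * g z + f z * wirt_p g z)"
      "smooth_upto n (\<lambda>z. wirt_m f z * g z + f z * wirt_m g z)"
      by (intro smooth_upto_add Suc.IH f g)+
    assume "n > 0"
    then obtain k where k: "n = Suc k" by (cases n) auto
    have f: "smooth_upto (Suc (Suc k)) f" and g: "smooth_upto (Suc (Suc k)) g"
      using Suc.prems unfolding k .
    show "wirt_p (\<lambda>z. wirt_m f z * g z + f z * wirt_m g z)
        = wirt_m (\<lambda>z. wirt_p f z * g z + f z * wirt_p g z)"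
      using smooth_upto_SucD(1)[OF f] smooth_upto_SucD(1)[OF g]
        smooth_upto_Suc_SucD[OF f] smooth_upto_Suc_SucD[OF g]
      by (simp add: wirt_add wirt_mult fun_eq_iff algebra_simps)
  qed
qed simp

lemma smooth_upto_inverse:
  "smooth_upto n f \<Longrightarrow> (\<And>z. f z \<noteq> 0) \<Longrightarrow> smooth_upto n (\<lambda>z. inverse (f z))"
proof (induction n arbitrary: f)
  case (Suc n)
  have f: "smooth_upto n f" "smooth_upto n (wirt_p f)" "smooth_upto n (wirt_m f)"
    using Suc.prems(1) smooth_upto_Suc_imp smooth_upto_SucD by blast+
  have inv: "smooth_upto n (\<lambda>z. inverse (f z))"
    using Suc.IH[OF f(1)] Suc.prems(2) by blast
  let ?sq = "\<lambda>z. - inverse (f z) * inverse (f z)"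
  show ?case
  proof (rule smooth_upto_SucI)
    show "has_wirt_deriv (\<lambda>z. inverse (f z)) (wirt_p f z * ?sq z) (wirt_m f z * ?sq z) z" for z
    proof -
      have "- wirt_p f z / (f z)\<^sup>2 = wirt_p f z * ?sq z" "- wirt_m f z / (f z)\<^sup>2 = wirt_m f z * ?sq z"
        by (simp_all add: power2_eq_square divide_inverse)
      with has_wirt_deriv_inverse[OF differentiable_imp_has_wirt_deriv[OF smooth_upto_SucD(1)[OF Suc.prems(1)]] Suc.prems(2)]
      show ?thesis
        by metis
    qed
    have "smooth_upto n (\<lambda>z. - inverse (f z))"
      using smooth_upto_mult[OF smooth_upto_const inv, of "-1"] by simp
    then have sq: "smooth_upto n ?sq"
      using inv by (rule smooth_upto_mult)
    show "smooth_upto n (\<lambda>z. wirt_p f z * ?sq z)" "smooth_upto n (\<lambda>z. wirt_m f z * ?sq z)"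
      by (intro smooth_upto_mult f sq)+
    assume "n > 0"
    then obtain k where k: "n = Suc k" by (cases n) auto
    have f: "smooth_upto (Suc (Suc k)) f"
      using Suc.prems(1) unfolding k .
    show "wirt_p (\<lambda>z. wirt_m f z * ?sq z) = wirt_m (\<lambda>z. wirt_p f z * ?sq z)"
      using smooth_upto_SucD(1)[OF f] smooth_upto_Suc_SucD[OF f] Suc.prems(2)
      by (simp add: wirt_mult wirt_uminus wirt_inverse fun_eq_iff)
  qed
qed simp

lemma smooth_upto_Ln:
  assumes f: "smooth_upto n f" and nonpos: "\<And>z. f z \<notin> \<real>\<^sub>\<le>\<^sub>0"
  shows "smooth_upto n (\<lambda>z. Ln (f z))"
proof (cases n)
  case (Suc m)
  have nz: "f z \<noteq> 0" for z
    using nonpos[of z] by auto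
  have fm: "smooth_upto m f" "smooth_upto m (wirt_p f)" "smooth_upto m (wirt_m f)"
    using f smooth_upto_Suc_imp smooth_upto_SucD unfolding Suc by blast+
  have inv: "smooth_upto m (\<lambda>z. inverse (f z))"
    using smooth_upto_inverse[OF fm(1) nz] .
  show ?thesis
    unfolding Suc
  proof (rule smooth_upto_SucI)
    show "has_wirt_deriv (\<lambda>z. Ln (f z)) (wirt_p f z * inverse (f z)) (wirt_m f z * inverse (f z)) z" for z
      using has_wirt_deriv_Ln[OF differentiable_imp_has_wirt_deriv[OF smooth_upto_SucD(1)[OF f[unfolded Suc]]] nonpos]
      by (simp add: divide_inverse)
    show "smooth_upto m (\<lambda>z. wirt_p f z * inverse (f z))" "smooth_upto m (\<lambda>z. wirt_m f z * inverse (f z))"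
      by (intro smooth_upto_mult fm inv)+
    assume "m > 0"
    then obtain k where k: "m = Suc k" by (cases m) auto
    have f: "smooth_upto (Suc (Suc k)) f"
      using f unfolding Suc k .
    show "wirt_p (\<lambda>z. wirt_m f z * inverse (f z)) = wirt_m (\<lambda>z. wirt_p f z * inverse (f z))"
      using smooth_upto_SucD(1)[OF f] smooth_upto_Suc_SucD[OF f] nz
      by (simp add: wirt_mult wirt_inverse fun_eq_iff)
  qed
qed simp

lemma smooth_upto_holomorphic: "f holomorphic_on UNIV \<Longrightarrow> smooth_upto n f"
proof (induction n arbitrary: f)
  case (Suc n)
  have "deriv f holomorphic_on UNIV"
    using Suc.prems holomorphic_deriv by blast
  with Suc show ?case
    by (intro smooth_upto_SucI[OF holomorphic_imp_has_wirt_deriv])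
      (auto simp: smooth_upto_const wirt_holomorphic)
qed simp

lemma smooth_upto_cnj: "smooth_upto n f \<Longrightarrow> smooth_upto n (\<lambda>z. cnj (f z))"
proof (induction n arbitrary: f)
  case (Suc n)
  show ?case
  proof (rule smooth_upto_SucI)
    show "has_wirt_deriv (\<lambda>z. cnj (f z)) (cnj (wirt_m f z)) (cnj (wirt_p f z)) z" for z
      using Suc.prems by (intro has_wirt_deriv_cnj differentiable_imp_has_wirt_deriv smooth_upto_SucD)
    show "smooth_upto n (\<lambda>z. cnj (wirt_m f z))" "smooth_upto n (\<lambda>z. cnj (wirt_p f z))"
      using Suc.IH smooth_upto_SucD[OF Suc.prems] by blast+
    assume "n > 0"
    then obtain k where k: "n = Suc k" by (cases n) auto
    have f: "smooth_upto (Suc (Suc k)) f"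
      using Suc.prems unfolding k .
    show "wirt_p (\<lambda>z. cnj (wirt_p f z)) = wirt_m (\<lambda>z. cnj (wirt_m f z))"
      using smooth_upto_Suc_SucD[OF f] by (simp add: wirt_cnj fun_eq_iff)
  qed
qed simp

lemma smooth_upto_sum:
  "finite A \<Longrightarrow> (\<And>i. i \<in> A \<Longrightarrow> smooth_upto n (f i)) \<Longrightarrow> smooth_upto n (\<lambda>z. \<Sum>i\<in>A. f i z)"
  by (induction A rule: finite_induct) (simp_all add: smooth_upto_const smooth_upto_add)

lemma smooth_upto_prod:
  "finite A \<Longrightarrow> (\<And>i. i \<in> A \<Longrightarrow> smooth_upto n (f i)) \<Longrightarrow> smooth_upto n (\<lambda>z. \<Prod>i\<in>A. f i z)"
  by (induction A rule: finite_induct) (simp_all add: smooth_upto_const smooth_upto_mult)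

lemma smooth_const: "smooth (\<lambda>z. c)"
  by (simp add: smooth_def smooth_upto_const)

lemma smooth_add: "smooth f \<Longrightarrow> smooth g \<Longrightarrow> smooth (\<lambda>z. f z + g z)"
  by (simp add: smooth_def smooth_upto_add)

lemma smooth_mult: "smooth f \<Longrightarrow> smooth g \<Longrightarrow> smooth (\<lambda>z. f z * g z)"
  by (simp add: smooth_def smooth_upto_mult)

lemma smooth_cmult: "smooth f \<Longrightarrow> smooth (\<lambda>z. c * f z)"
  by (rule smooth_mult[OF smooth_const])

lemma smooth_Ln: "smooth f \<Longrightarrow> (\<And>z. f z \<notin> \<real>\<^sub>\<le>\<^sub>0) \<Longrightarrow> smooth (\<lambda>z. Ln (f z))"
  by (simp add: smooth_def smooth_upto_Ln)

lemma smooth_holomorphic: "f holomorphic_on UNIV \<Longrightarrow> smooth f"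
  by (simp add: smooth_def smooth_upto_holomorphic)

lemma smooth_cnj: "smooth f \<Longrightarrow> smooth (\<lambda>z. cnj (f z))"
  by (simp add: smooth_def smooth_upto_cnj)

lemma smooth_sum: "finite A \<Longrightarrow> (\<And>i. i \<in> A \<Longrightarrow> smooth (f i)) \<Longrightarrow> smooth (\<lambda>z. \<Sum>i\<in>A. f i z)"
  by (simp add: smooth_def smooth_upto_sum)

lemma smooth_prod: "finite A \<Longrightarrow> (\<And>i. i \<in> A \<Longrightarrow> smooth (f i)) \<Longrightarrow> smooth (\<lambda>z. \<Prod>i\<in>A. f i z)"
  by (simp add: smooth_def smooth_upto_prod)

lemma smooth_wirt:
  assumes "smooth f"
  shows "smooth (wirt_p f)" "smooth (wirt_m f)"
  using assms smooth_upto_SucD unfolding smooth_def by blast+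

lemma smooth_differentiable: "smooth f \<Longrightarrow> f differentiable (at z)"
  using smooth_upto_SucD(1) unfolding smooth_def by blast

lemma smooth_has_wirt_deriv: "smooth f \<Longrightarrow> has_wirt_deriv f (wirt_p f z) (wirt_m f z) z"
  by (intro differentiable_imp_has_wirt_deriv smooth_differentiable)

lemma smooth_wirt_commute: "smooth f \<Longrightarrow> wirt_m (wirt_p f) = wirt_p (wirt_m f)"
  using smooth_upto_Suc_SucD(3)[of 0 f] unfolding smooth_def by blast

section \<open>Ring homomorphisms and dual numbers\<close>

locale comm_ring_hom =
  fixes hom :: "'a::comm_ring_1 \<Rightarrow> 'b::comm_ring_1"
  assumes hom_add: "hom (x + y) = hom x + hom y"
    and hom_mult: "hom (x * y) = hom x * hom y"
    and hom_one: "hom 1 = 1"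
begin

lemma hom_zero: "hom 0 = 0"
  using hom_add[of 0 0] by simp

lemma hom_uminus: "hom (- x) = - hom x"
  using hom_add[of "- x" x] by (simp add: hom_zero eq_neg_iff_add_eq_0)

lemma hom_diff: "hom (x - y) = hom x - hom y"
  using hom_add[of x "- y"] by (simp add: hom_uminus)

lemma hom_power: "hom (x ^ n) = hom x ^ n"
  by (induction n) (simp_all add: hom_one hom_mult)

lemma hom_sum: "hom (\<Sum>i\<in>A. f i) = (\<Sum>i\<in>A. hom (f i))"
  by (induction A rule: infinite_finite_induct) (simp_all add: hom_zero hom_add)

lemma hom_prod: "hom (\<Prod>i\<in>A. f i) = (\<Prod>i\<in>A. hom (f i))"
  by (induction A rule: infinite_finite_induct) (simp_all add: hom_one hom_mult)

end

text \<open>\<^term>\<open>Dual2 a b c\<close> stands for \<open>a + b u + c v\<close> in \<open>R[u, v] / (u, v)\<^sup>2\<close>.\<close>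

datatype 'a dual2 = Dual2 'a 'a 'a

instantiation dual2 :: (comm_ring_1) comm_ring_1
begin

fun plus_dual2 :: "'a dual2 \<Rightarrow> 'a dual2 \<Rightarrow> 'a dual2" where
  "Dual2 a b c + Dual2 a' b' c' = Dual2 (a + a') (b + b') (c + c')"

fun minus_dual2 :: "'a dual2 \<Rightarrow> 'a dual2 \<Rightarrow> 'a dual2" where
  "Dual2 a b c - Dual2 a' b' c' = Dual2 (a - a') (b - b') (c - c')"

fun uminus_dual2 :: "'a dual2 \<Rightarrow> 'a dual2" where
  "- Dual2 a b c = Dual2 (- a) (- b) (- c)"

fun times_dual2 :: "'a dual2 \<Rightarrow> 'a dual2 \<Rightarrow> 'a dual2" where
  "Dual2 a b c * Dual2 a' b' c' = Dual2 (a * a') (a * b' + b * a') (a * c' + c * a')"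

definition zero_dual2 :: "'a dual2" where
  "0 = Dual2 0 0 0"

definition one_dual2 :: "'a dual2" where
  "1 = Dual2 1 0 0"

instance
proof
  fix a b c :: "'a dual2"
  show "a * b * c = a * (b * c)" by (cases a; cases b; cases c) (simp add: algebra_simps)
  show "a * b = b * a" by (cases a; cases b) (simp add: algebra_simps)
  show "1 * a = a" by (cases a) (simp add: one_dual2_def)
  show "(a + b) * c = a * c + b * c" by (cases a; cases b; cases c) (simp add: algebra_simps)
  show "a + b + c = a + (b + c)" by (cases a; cases b; cases c) (simp add: algebra_simps)
  show "a + b = b + a" by (cases a; cases b) (simp add: algebra_simps)
  show "0 + a = a" by (cases a) (simp add: zero_dual2_def)
  show "- a + a = 0" by (cases a) (simp add: zero_dual2_def)
  show "a - b = a + - b" by (cases a; cases b) simp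
  show "(0 :: 'a dual2) \<noteq> 1" by (simp add: zero_dual2_def one_dual2_def)
qed

end

fun dual2_eval :: "('a \<Rightarrow> 'b::comm_ring_1) \<Rightarrow> 'b \<Rightarrow> 'b \<Rightarrow> 'a dual2 \<Rightarrow> 'b" where
  "dual2_eval \<phi> u v (Dual2 a b c) = \<phi> a + \<phi> b * u + \<phi> c * v"

lemma comm_ring_hom_dual2_eval:
  assumes "comm_ring_hom \<phi>" and uv: "u * u = 0" "u * v = 0" "v * v = 0"
  shows "comm_ring_hom (dual2_eval \<phi> u v)"
proof -
  interpret comm_ring_hom \<phi> by fact
  show ?thesis
  proof
    fix x y :: "'a dual2"
    show "dual2_eval \<phi> u v (x + y) = dual2_eval \<phi> u v x + dual2_eval \<phi> u v y"
      by (cases x; cases y) (simp add: hom_add algebra_simps)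
    have vu: "v * u = 0"
      using uv(2) by (simp add: mult.commute)
    show "dual2_eval \<phi> u v (x * y) = dual2_eval \<phi> u v x * dual2_eval \<phi> u v y"
    proof (cases x; cases y)
      fix a b c a' b' c' assume xy: "x = Dual2 a b c" "y = Dual2 a' b' c'"
      have "dual2_eval \<phi> u v x * dual2_eval \<phi> u v y =
         \<phi> a * \<phi> a' + (\<phi> a * \<phi> b' + \<phi> b * \<phi> a') * u + (\<phi> a * \<phi> c' + \<phi> c * \<phi> a') * v
         + \<phi> b * \<phi> b' * (u * u) + (\<phi> b * \<phi> c' + \<phi> c * \<phi> b') * (u * v) + \<phi> c * \<phi> c' * (v * v)"
        unfolding xy by (simp add: vu algebra_simps)
      then show ?thesis
        unfolding xy using uv by (simp add: hom_add hom_mult)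
    qed
  qed (simp add: one_dual2_def hom_one hom_zero)
qed

text \<open>Jets live in \<open>(\<complex>[u\<^sub>1, v\<^sub>1] / (u\<^sub>1, v\<^sub>1)\<^sup>2)[u\<^sub>2, v\<^sub>2] / (u\<^sub>2, v\<^sub>2)\<^sup>2\<close>: \<open>u\<^sub>1, u\<^sub>2\<close> stand
  for the shifts of \<open>x\<^sub>+, x\<^sub>-\<close> and \<open>v\<^sub>1, v\<^sub>2\<close> for their derivatives. Thus
  \<^term>\<open>tpoly a b c d\<close> is \<open>a + b u\<^sub>1 + c u\<^sub>2 + d u\<^sub>1u\<^sub>2\<close> and \<^term>\<open>tfactor t\<close> is
  \<open>(1 + t v\<^sub>1)(1 + t v\<^sub>2)\<close>.\<close>

type_synonym tjet = "complex dual2 dual2"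

definition tconst :: "complex \<Rightarrow> tjet" where
  "tconst c = Dual2 (Dual2 c 0 0) 0 0"

fun tbody :: "tjet \<Rightarrow> complex" where
  "tbody (Dual2 (Dual2 a _ _) _ _) = a"

definition tpoly :: "complex \<Rightarrow> complex \<Rightarrow> complex \<Rightarrow> complex \<Rightarrow> tjet" where
  "tpoly a b c d = Dual2 (Dual2 a b 0) (Dual2 c d 0) 0"

definition tfactor :: "complex \<Rightarrow> tjet" where
  "tfactor t = Dual2 (Dual2 1 0 t) 0 (Dual2 t 0 (t * t))"

lemma tbody_diff_tconst: "tbody (X - tconst (tbody X)) = 0"
  by (cases X rule: dual2.exhaust, rename_tac A B C, case_tac A) (simp add: tconst_def)

lemma tbody_zero_imp_cube_zero:
  assumes "tbody s = 0"
  shows "s ^ 3 = 0"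
proof -
  obtain a b c B C where s: "s = Dual2 (Dual2 a b c) B C"
    by (metis dual2.exhaust)
  with assms have "a = 0"
    by simp
  then show ?thesis
    unfolding s by (cases B; cases C) (simp add: power3_eq_cube zero_dual2_def algebra_simps)
qed

lemma tpoly_tfactor_0: "tpoly a b c d * tfactor 0 = tpoly a b c d"
  unfolding tpoly_def tfactor_def by (simp add: zero_dual2_def)

text \<open>The truncated series \<open>ln g + s/g - s\<^sup>2/(2g\<^sup>2)\<close> of \<open>ln (g + s)\<close>; the factor
  \<^term>\<open>tfactor t\<close> contributes the summand \<open>t (v\<^sub>1 + v\<^sub>2)\<close>.\<close>

lemma tln_tpoly_tfactor:
  assumes "g \<noteq> 0"
  shows "tconst (Ln g) + tconst (1 / g) * (tpoly g a b d * tfactor t - tconst g)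
      - tconst (1 / (2 * g\<^sup>2)) * (tpoly g a b d * tfactor t - tconst g)\<^sup>2
    = tpoly (Ln g) (a / g) (b / g) (d / g - a * b / g\<^sup>2) + Dual2 (Dual2 0 0 t) 0 (Dual2 t 0 0)"
  using assms unfolding tpoly_def tfactor_def tconst_def
  by (simp add: power2_eq_square zero_dual2_def field_simps)

section \<open>The Grassmann algebra\<close>

definition merge_inversions :: "'g::linorder set \<Rightarrow> 'g set \<Rightarrow> ('g \<times> 'g) set" where
  "merge_inversions A B = {(a, b). a \<in> A \<and> b \<in> B \<and> b < a}"

lemma merge_sign_inversions: "merge_sign A B = (-1) ^ card (merge_inversions A B)"
  unfolding merge_sign_def merge_inversions_def by simp

lemma finite_merge_inversions: "finite A \<Longrightarrow> finite B \<Longrightarrow> finite (merge_inversions A B)"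
  by (rule finite_subset[of _ "A \<times> B"]) (auto simp: merge_inversions_def)

lemma merge_sign_empty [simp]: "merge_sign {} B = 1" "merge_sign A {} = 1"
  unfolding merge_sign_def by auto

lemma merge_sign_Un_left:
  assumes "finite A" "finite B" "finite C" "A \<inter> B = {}"
  shows "merge_sign (A \<union> B) C = merge_sign A C * merge_sign B C"
proof -
  have "merge_inversions (A \<union> B) C = merge_inversions A C \<union> merge_inversions B C"
    "merge_inversions A C \<inter> merge_inversions B C = {}"
    using assms(4) unfolding merge_inversions_def by auto
  then show ?thesis
    using assms unfolding merge_sign_inversions
    by (simp add: card_Un_disjoint finite_merge_inversions power_add)
qed

lemma merge_sign_Un_right:
  assumes "finite A" "finite B" "finite C" "B \<inter> C = {}"
  shows "merge_sign A (B \<union> C) = merge_sign A B * merge_sign A C"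
proof -
  have "merge_inversions A (B \<union> C) = merge_inversions A B \<union> merge_inversions A C"
    "merge_inversions A B \<inter> merge_inversions A C = {}"
    using assms(4) unfolding merge_inversions_def by auto
  then show ?thesis
    using assms unfolding merge_sign_inversions
    by (simp add: card_Un_disjoint finite_merge_inversions power_add)
qed

lemma merge_sign_swap:
  assumes "finite A" "finite B" "A \<inter> B = {}"
  shows "merge_sign A B * merge_sign B A = (-1) ^ (card A * card B)"
proof -
  let ?flip = "(\<lambda>(b, a). (a, b)) ` merge_inversions B A"
  have "A \<times> B = merge_inversions A B \<union> ?flip" "merge_inversions A B \<inter> ?flip = {}"
    using assms(3) unfolding merge_inversions_def by (auto simp: image_iff)
  moreover have "card ?flip = card (merge_inversions B A)"
    by (rule card_image) (auto simp: inj_on_def)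
  ultimately have "card A * card B = card (merge_inversions A B) + card (merge_inversions B A)"
    using assms by (metis card_Un_disjoint card_cartesian_product finite_imageI finite_merge_inversions)
  then show ?thesis
    unfolding merge_sign_inversions by (simp add: power_add)
qed

lemma merge_sign_commute_even:
  assumes "finite A" "finite B" "A \<inter> B = {}" "even (card A) \<or> even (card B)"
  shows "merge_sign A B = merge_sign B A"
proof -
  have "merge_sign A B * merge_sign B A = 1"
    using merge_sign_swap[OF assms(1-3)] assms(4) by auto
  moreover have "merge_sign A B \<in> {1, -1}" "merge_sign B A \<in> {1, -1}"
    unfolding merge_sign_def by (simp_all add: minus_one_power_iff)
  ultimately show ?thesis
    by auto
qed

lemma gmul_gconst_left: "gmul (gconst c) (x :: 'g::{finite,linorder} grass) = gscale c x"
proof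
  fix S :: "'g set"
  have "(\<Sum>A\<in>Pow S. merge_sign A (S - A) * gconst c A * x (S - A)) = (\<Sum>A\<in>{{}}. c * x (S - A))"
    by (rule sum.mono_neutral_cong_right) (auto simp: gconst_def)
  then show "gmul (gconst c) x S = gscale c x S"
    unfolding gmul_def gscale_def by simp
qed

lemma gmul_gconst_right: "gmul (x :: 'g::{finite,linorder} grass) (gconst c) = gscale c x"
proof
  fix S :: "'g set"
  have "(\<Sum>A\<in>Pow S. merge_sign A (S - A) * x A * gconst c (S - A)) = (\<Sum>A\<in>{S}. c * x A)"
    by (rule sum.mono_neutral_cong_right) (auto simp: gconst_def)
  then show "gmul x (gconst c) S = gscale c x S"
    unfolding gmul_def gscale_def by simp
qed

definition gmul3 :: "'g::linorder grass \<Rightarrow> 'g grass \<Rightarrow> 'g grass \<Rightarrow> 'g grass" where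
  "gmul3 x y w S = (\<Sum>(B, C) | B \<subseteq> S \<and> C \<subseteq> S \<and> B \<inter> C = {}.
     merge_sign B C * merge_sign B (S - B - C) * merge_sign C (S - B - C) * x B * y C * w (S - B - C))"

lemma gmul_gmul_left:
  fixes x y w :: "'g::{finite,linorder} grass"
  shows "gmul (gmul x y) w S = gmul3 x y w S"
proof -
  have "gmul (gmul x y) w S = (\<Sum>(A, B)\<in>Sigma (Pow S) Pow.
      merge_sign A (S - A) * (merge_sign B (A - B) * x B * y (A - B)) * w (S - A))"
    unfolding gmul_def by (simp add: sum_distrib_left sum_distrib_right sum.Sigma)
  also have "\<dots> = gmul3 x y w S"
    unfolding gmul3_def
  proof (rule sum.reindex_bij_witness[where i = "\<lambda>(B, C). (B \<union> C, B)" and j = "\<lambda>(A, B). (B, A - B)"])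
    fix AB assume "AB \<in> Sigma (Pow S) Pow"
    then obtain A B where AB: "AB = (A, B)" "B \<subseteq> A" "A \<subseteq> S"
      by auto
    have "S - B - (A - B) = S - A" "A = B \<union> (A - B)"
      using AB by auto
    moreover from this have "merge_sign A (S - A) = merge_sign B (S - A) * merge_sign (A - B) (S - A)"
      by (metis Diff_disjoint finite merge_sign_Un_left)
    ultimately show "(case (\<lambda>(A, B). (B, A - B)) AB of (B, C) \<Rightarrow> merge_sign B C * merge_sign B (S - B - C)
        * merge_sign C (S - B - C) * x B * y C * w (S - B - C))
      = (case AB of (A, B) \<Rightarrow> merge_sign A (S - A) * (merge_sign B (A - B) * x B * y (A - B)) * w (S - A))"
      unfolding AB by simp
  qed auto
  finally show ?thesis .
qed

lemma gmul_gmul_right: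
  fixes x y w :: "'g::{finite,linorder} grass"
  shows "gmul x (gmul y w) S = gmul3 x y w S"
proof -
  have "gmul x (gmul y w) S = (\<Sum>(B, C)\<in>Sigma (Pow S) (\<lambda>B. Pow (S - B)).
      merge_sign B (S - B) * x B * (merge_sign C (S - B - C) * y C * w (S - B - C)))"
    unfolding gmul_def by (simp add: sum_distrib_left sum_distrib_right sum.Sigma)
  also have "\<dots> = gmul3 x y w S"
    unfolding gmul3_def
  proof (rule sum.cong)
    fix BC assume "BC \<in> {(B, C). B \<subseteq> S \<and> C \<subseteq> S \<and> B \<inter> C = {}}"
    then obtain B C where BC: "BC = (B, C)" "C \<subseteq> S" "B \<inter> C = {}"
      by auto
    then have "S - B = C \<union> (S - B - C)"
      by auto
    then have "merge_sign B (S - B) = merge_sign B C * merge_sign B (S - B - C)"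
      by (metis Diff_disjoint finite merge_sign_Un_right)
    then show "(case BC of (B, C) \<Rightarrow> merge_sign B (S - B) * x B * (merge_sign C (S - B - C) * y C * w (S - B - C)))
      = (case BC of (B, C) \<Rightarrow> merge_sign B C * merge_sign B (S - B - C)
        * merge_sign C (S - B - C) * x B * y C * w (S - B - C))"
      unfolding BC by simp
  qed auto
  finally show ?thesis .
qed

lemma gmul_assoc: "gmul (gmul x y) w = gmul x (gmul y (w :: 'g::{finite,linorder} grass))"
  by (simp add: fun_eq_iff gmul_gmul_left gmul_gmul_right)

lemma gmul_gadd_left: "gmul (gadd x y) w = gadd (gmul x w) (gmul y w)"
  unfolding gmul_def gadd_def by (auto simp: algebra_simps sum.distrib)

lemma gmul_gscale_right: "gmul x (gscale c y) = gscale c (gmul x y)"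
  unfolding gmul_def gscale_def by (auto simp: algebra_simps sum_distrib_left)

lemma gmul_nonzeroE:
  fixes x y :: "'g::{finite,linorder} grass"
  assumes "gmul x y S \<noteq> 0"
  obtains A where "A \<subseteq> S" "x A \<noteq> 0" "y (S - A) \<noteq> 0"
proof -
  from assms obtain A where "A \<in> Pow S" "merge_sign A (S - A) * x A * y (S - A) \<noteq> 0"
    unfolding gmul_def by (meson sum.neutral)
  then show ?thesis
    using that by auto
qed

lemma gmul_parity:
  fixes x y :: "'g::{finite,linorder} grass"
  assumes "\<And>S. x S \<noteq> 0 \<Longrightarrow> odd (card S) = a" "\<And>S. y S \<noteq> 0 \<Longrightarrow> odd (card S) = b"
    and "gmul x y S \<noteq> 0"
  shows "odd (card S) = (a \<noteq> b)"
proof -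
  obtain A where A: "A \<subseteq> S" "x A \<noteq> 0" "y (S - A) \<noteq> 0"
    using assms(3) by (rule gmul_nonzeroE)
  then have "card S = card A + card (S - A)"
    by (metis card_Diff_subset card_mono finite le_add_diff_inverse)
  then show ?thesis
    using assms(1)[OF A(2)] assms(2)[OF A(3)] by auto
qed

lemma gmul_support_left:
  fixes x y :: "'g::{finite,linorder} grass"
  assumes "\<And>S. x S \<noteq> 0 \<Longrightarrow> t \<in> S" "gmul x y S \<noteq> 0"
  shows "t \<in> S"
  using assms(2) by (rule gmul_nonzeroE) (use assms(1) in blast)

lemma gmul_common_generator:
  fixes x y :: "'g::{finite,linorder} grass"
  assumes "\<And>S. x S \<noteq> 0 \<Longrightarrow> t \<in> S" "\<And>S. y S \<noteq> 0 \<Longrightarrow> t \<in> S"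
  shows "gmul x y = (\<lambda>S. 0)"
proof
  fix S show "gmul x y S = 0"
  proof (rule ccontr)
    assume "gmul x y S \<noteq> 0"
    then obtain A where "A \<subseteq> S" "x A \<noteq> 0" "y (S - A) \<noteq> 0"
      by (rule gmul_nonzeroE)
    then show False
      using assms by blast
  qed
qed

lemma gmul_commute_even:
  fixes x y :: "'g::{finite,linorder} grass"
  assumes "\<And>S. x S \<noteq> 0 \<Longrightarrow> even (card S)"
  shows "gmul x y = gmul y x"
proof
  fix S :: "'g set"
  have "gmul y x S = (\<Sum>A\<in>Pow S. merge_sign (S - A) (S - (S - A)) * y (S - A) * x (S - (S - A)))"
    unfolding gmul_def
    by (rule sum.reindex_bij_witness[where i = "\<lambda>A. S - A" and j = "\<lambda>A. S - A"])
       (auto simp: Diff_Diff_Int Int_absorb1 Int_absorb2)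
  also have "\<dots> = gmul x y S"
    unfolding gmul_def
  proof (rule sum.cong[OF refl])
    fix A assume "A \<in> Pow S"
    then have A: "S - (S - A) = A"
      by auto
    show "merge_sign (S - A) (S - (S - A)) * y (S - A) * x (S - (S - A))
        = merge_sign A (S - A) * x A * y (S - A)"
    proof (cases "x A = 0")
      case False
      then have "merge_sign (S - A) A = merge_sign A (S - A)"
        using assms by (intro merge_sign_commute_even) auto
      then show ?thesis
        unfolding A by simp
    qed (simp add: A)
  qed
  finally show "gmul x y S = gmul y x S" ..
qed

lemma gbody_gmul: "gbody (gmul x (y :: 'g::{finite,linorder} grass)) = gbody x * gbody y"
  unfolding gbody_def gmul_def by simp


text \<open>All quantities of the theorem are even, and even elements commute, so they form a
  commutative ring.\<close>

definition grass_even :: "'g grass \<Rightarrow> bool" where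
  "grass_even x \<longleftrightarrow> (\<forall>S. x S \<noteq> 0 \<longrightarrow> even (card S))"

lemma grass_even_gconst: "grass_even (gconst c)"
  by (simp add: grass_even_def gconst_def)

lemma grass_even_gadd: "grass_even x \<Longrightarrow> grass_even y \<Longrightarrow> grass_even (gadd x y)"
  unfolding grass_even_def gadd_def by (metis add.right_neutral add_0)

lemma grass_even_gscale: "grass_even x \<Longrightarrow> grass_even (gscale c x)"
  unfolding grass_even_def gscale_def by auto

lemma grass_even_gmul:
  "grass_even x \<Longrightarrow> grass_even y \<Longrightarrow> grass_even (gmul x (y :: 'g::{finite,linorder} grass))"
  unfolding grass_even_def using gmul_parity[of x False y False] by auto

typedef (overloaded) ('g::"{finite,linorder}") egrass = "{x :: 'g grass. grass_even x}"
  by (rule exI[of _ "gconst 0"]) (simp add: grass_even_gconst)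

lemma grass_even_Rep_egrass: "grass_even (Rep_egrass x)"
  using Rep_egrass by auto

lemma Rep_egrass_Abs_egrass: "grass_even x \<Longrightarrow> Rep_egrass (Abs_egrass x) = x"
  by (simp add: Abs_egrass_inverse)

lemma egrass_eqI: "Rep_egrass x = Rep_egrass y \<Longrightarrow> x = y"
  by (simp add: Rep_egrass_inject)

instantiation egrass :: ("{finite,linorder}") comm_ring_1
begin

definition zero_egrass :: "'a egrass" where "0 = Abs_egrass (gconst 0)"
definition one_egrass :: "'a egrass" where "1 = Abs_egrass (gconst 1)"
definition plus_egrass :: "'a egrass \<Rightarrow> 'a egrass \<Rightarrow> 'a egrass" where
  "x + y = Abs_egrass (gadd (Rep_egrass x) (Rep_egrass y))"
definition uminus_egrass :: "'a egrass \<Rightarrow> 'a egrass" where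
  "- x = Abs_egrass (gscale (-1) (Rep_egrass x))"
definition minus_egrass :: "'a egrass \<Rightarrow> 'a egrass \<Rightarrow> 'a egrass" where
  "x - y = Abs_egrass (gadd (Rep_egrass x) (gscale (-1) (Rep_egrass y)))"
definition times_egrass :: "'a egrass \<Rightarrow> 'a egrass \<Rightarrow> 'a egrass" where
  "x * y = Abs_egrass (gmul (Rep_egrass x) (Rep_egrass y))"

lemma Rep_egrass_zero: "Rep_egrass (0 :: 'a egrass) = gconst 0"
  unfolding zero_egrass_def by (simp add: Rep_egrass_Abs_egrass grass_even_gconst)

lemma Rep_egrass_one: "Rep_egrass (1 :: 'a egrass) = gconst 1"
  unfolding one_egrass_def by (simp add: Rep_egrass_Abs_egrass grass_even_gconst)

lemma Rep_egrass_plus: "Rep_egrass (x + y :: 'a egrass) = gadd (Rep_egrass x) (Rep_egrass y)"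
  unfolding plus_egrass_def by (simp add: Rep_egrass_Abs_egrass grass_even_gadd grass_even_Rep_egrass)

lemma Rep_egrass_uminus: "Rep_egrass (- x :: 'a egrass) = gscale (-1) (Rep_egrass x)"
  unfolding uminus_egrass_def by (simp add: Rep_egrass_Abs_egrass grass_even_gscale grass_even_Rep_egrass)

lemma Rep_egrass_minus:
  "Rep_egrass (x - y :: 'a egrass) = gadd (Rep_egrass x) (gscale (-1) (Rep_egrass y))"
  unfolding minus_egrass_def
  by (simp add: Rep_egrass_Abs_egrass grass_even_gadd grass_even_gscale grass_even_Rep_egrass)

lemma Rep_egrass_times: "Rep_egrass (x * y :: 'a egrass) = gmul (Rep_egrass x) (Rep_egrass y)"
  unfolding times_egrass_def by (simp add: Rep_egrass_Abs_egrass grass_even_gmul grass_even_Rep_egrass)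

instance
proof
  fix a b c :: "'a egrass"
  show "a * b * c = a * (b * c)"
    by (rule egrass_eqI) (simp add: Rep_egrass_times gmul_assoc)
  have "gmul (Rep_egrass a) (Rep_egrass b) = gmul (Rep_egrass b) (Rep_egrass a)"
    by (rule gmul_commute_even) (use grass_even_Rep_egrass[of a] in \<open>auto simp: grass_even_def\<close>)
  then show "a * b = b * a"
    by (intro egrass_eqI) (simp add: Rep_egrass_times)
  show "1 * a = a"
    by (rule egrass_eqI) (simp add: Rep_egrass_times Rep_egrass_one gmul_gconst_left gscale_def)
  show "(a + b) * c = a * c + b * c"
    by (rule egrass_eqI) (simp add: Rep_egrass_times Rep_egrass_plus gmul_gadd_left)
  show "a + b + c = a + (b + c)"
    by (rule egrass_eqI) (simp add: Rep_egrass_plus gadd_def add.assoc)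
  show "a + b = b + a"
    by (rule egrass_eqI) (simp add: Rep_egrass_plus gadd_def add.commute)
  show "0 + a = a"
    by (rule egrass_eqI) (simp add: Rep_egrass_plus Rep_egrass_zero gadd_def gconst_def)
  show "- a + a = 0"
    by (rule egrass_eqI) (simp add: Rep_egrass_plus Rep_egrass_zero Rep_egrass_uminus gadd_def gscale_def gconst_def)
  show "a - b = a + - b"
    by (rule egrass_eqI) (simp add: Rep_egrass_plus Rep_egrass_minus Rep_egrass_uminus)
  show "(0 :: 'a egrass) \<noteq> 1"
    using Rep_egrass_zero Rep_egrass_one by (metis gconst_def zero_neq_one)
qed

end

definition econst :: "complex \<Rightarrow> 'g::{finite,linorder} egrass" where
  "econst c = Abs_egrass (gconst c)"

lemma Rep_egrass_econst: "Rep_egrass (econst c) = gconst c"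
  unfolding econst_def by (simp add: Rep_egrass_Abs_egrass grass_even_gconst)

interpretation econst: comm_ring_hom econst
proof
  fix a b :: complex
  show "econst (a + b) = econst a + econst b"
    by (rule egrass_eqI) (simp add: Rep_egrass_econst Rep_egrass_plus gadd_def gconst_def fun_eq_iff)
  show "econst (a * b) = econst a * econst b"
    by (rule egrass_eqI)
      (simp add: Rep_egrass_econst Rep_egrass_times gmul_gconst_left, simp add: gscale_def gconst_def fun_eq_iff)
  show "econst 1 = 1"
    by (rule egrass_eqI) (simp add: Rep_egrass_econst Rep_egrass_one)
qed

lemma gscale_Rep_egrass: "gscale c (Rep_egrass x) = Rep_egrass (econst c * x)"
  by (simp add: Rep_egrass_times Rep_egrass_econst gmul_gconst_left)

lemma Rep_egrass_sum: "finite A \<Longrightarrow> Rep_egrass (\<Sum>i\<in>A. f i) = gsum (\<lambda>i. Rep_egrass (f i)) A"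
  by (induction A rule: finite_induct) (auto simp: Rep_egrass_zero Rep_egrass_plus gsum_def gadd_def gconst_def)

lemma Rep_egrass_prod_list: "Rep_egrass (prod_list (map f xs)) = gprod_list (map (\<lambda>x. Rep_egrass (f x)) xs)"
  by (induction xs) (auto simp: Rep_egrass_one Rep_egrass_times gprod_list_def)

lemma Rep_egrass_power: "Rep_egrass (x ^ k) = gpow (Rep_egrass x) k"
  by (induction k) (auto simp: Rep_egrass_one Rep_egrass_times gpow_def)

lemma gbody_Rep_egrass_plus: "gbody (Rep_egrass (x + y)) = gbody (Rep_egrass x) + gbody (Rep_egrass y)"
  by (simp add: Rep_egrass_plus gbody_def gadd_def)

lemma gbody_Rep_egrass_times: "gbody (Rep_egrass (x * y)) = gbody (Rep_egrass x) * gbody (Rep_egrass y)"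
  by (simp add: Rep_egrass_times gbody_gmul)

lemma gbody_Rep_egrass_econst: "gbody (Rep_egrass (econst c)) = c"
  by (simp add: Rep_egrass_econst gbody_def gconst_def)

lemma gsoul_Rep_egrass_econst_plus:
  assumes "gbody (Rep_egrass s) = 0"
  shows "gsoul (Rep_egrass (econst b + s)) = Rep_egrass s"
  using assms by (auto simp: gsoul_def Rep_egrass_plus Rep_egrass_econst gadd_def gconst_def gbody_def)

text \<open>The series defining \<^const>\<open>gln\<close> and \<^const>\<open>ginv\<close> stop at \<^term>\<open>CARD('g)\<close>, so the
  hypothesis \<^term>\<open>CARD('g) \<ge> 2\<close> keeps all terms surviving \<open>s\<^sup>3 = 0\<close>.\<close>

lemma power_eq_0_mono: "(x :: 'a::comm_semiring_1) ^ m = 0 \<Longrightarrow> m \<le> n \<Longrightarrow> x ^ n = 0"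
  by (metis le_add_diff_inverse mult_zero_left power_add)

lemma gln_econst_plus:
  fixes s :: "'g::{finite,linorder} egrass"
  assumes "gbody (Rep_egrass s) = 0" "s ^ 3 = 0" "CARD('g) \<ge> 2"
  shows "gln (Rep_egrass (econst b + s))
    = Rep_egrass (econst (Ln b) + econst (1 / b) * s - econst (1 / (2 * b\<^sup>2)) * s\<^sup>2)"
proof -
  have body: "gbody (Rep_egrass (econst b + s)) = b"
    using assms(1) by (simp add: gbody_Rep_egrass_plus gbody_Rep_egrass_econst)
  have "gsum (\<lambda>k. gscale ((-1) ^ (k + 1) / (of_nat k * b ^ k)) (gpow (Rep_egrass s) k)) {1..CARD('g)}
      = Rep_egrass (\<Sum>k\<in>{1..CARD('g)}. econst ((-1) ^ (k + 1) / (of_nat k * b ^ k)) * s ^ k)"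
    by (simp add: Rep_egrass_sum gscale_Rep_egrass Rep_egrass_power[symmetric])
  also have "(\<Sum>k\<in>{1..CARD('g)}. econst ((-1) ^ (k + 1) / (of_nat k * b ^ k)) * s ^ k)
      = (\<Sum>k\<in>{1, 2}. econst ((-1) ^ (k + 1) / (of_nat k * b ^ k)) * s ^ k)"
    using assms(2,3) power_eq_0_mono[OF assms(2)] by (intro sum.mono_neutral_right) auto
  finally show ?thesis
    unfolding gln_def body gsoul_Rep_egrass_econst_plus[OF assms(1)]
    by (simp add: Rep_egrass_plus Rep_egrass_minus Rep_egrass_econst econst.hom_uminus
        gscale_Rep_egrass[symmetric] gscale_def gadd_def fun_eq_iff)
qed

lemma ginv_econst_plus:
  fixes s :: "'g::{finite,linorder} egrass"
  assumes "gbody (Rep_egrass s) = 0" "s ^ 3 = 0" "CARD('g) \<ge> 2" "b \<noteq> 0"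
  shows "gmul (ginv (Rep_egrass (econst b + s))) (Rep_egrass (econst b + s)) = gconst 1"
proof -
  have body: "gbody (Rep_egrass (econst b + s)) = b"
    using assms(1) by (simp add: gbody_Rep_egrass_plus gbody_Rep_egrass_econst)
  let ?inv = "econst (1 / b) - econst (1 / b\<^sup>2) * s + econst (1 / b ^ 3) * s\<^sup>2"
  have "gsum (\<lambda>k. gscale ((-1) ^ k / b ^ (k + 1)) (gpow (Rep_egrass s) k)) {0..CARD('g)}
      = Rep_egrass (\<Sum>k\<in>{0..CARD('g)}. econst ((-1) ^ k / b ^ (k + 1)) * s ^ k)"
    by (simp add: Rep_egrass_sum gscale_Rep_egrass Rep_egrass_power[symmetric])
  also have "(\<Sum>k\<in>{0..CARD('g)}. econst ((-1) ^ k / b ^ (k + 1)) * s ^ k)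
      = (\<Sum>k\<in>{0, 1, 2}. econst ((-1) ^ k / b ^ (k + 1)) * s ^ k)"
    using assms(2,3) power_eq_0_mono[OF assms(2)] by (intro sum.mono_neutral_right) auto
  also have "\<dots> = ?inv"
    by (simp add: econst.hom_uminus econst.hom_one numeral_2_eq_2 numeral_3_eq_3 algebra_simps)
  finally have "ginv (Rep_egrass (econst b + s)) = Rep_egrass ?inv"
    unfolding ginv_def body gsoul_Rep_egrass_econst_plus[OF assms(1)] .
  moreover have "?inv * (econst b + s) = 1"
  proof -
    have "?inv * (econst b + s) = econst (1 / b) * econst b
        + (econst (1 / b) - econst (1 / b\<^sup>2) * econst b) * s
        + (econst (1 / b ^ 3) * econst b - econst (1 / b\<^sup>2)) * s\<^sup>2 + econst (1 / b ^ 3) * s ^ 3"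
      by (simp add: algebra_simps power2_eq_square power3_eq_cube)
    also have "\<dots> = 1"
      using assms(2,4) by (simp flip: econst.hom_mult add: power2_eq_square power3_eq_cube econst.hom_one)
    finally show ?thesis .
  qed
  ultimately show ?thesis
    by (simp flip: Rep_egrass_times add: Rep_egrass_one)
qed

section \<open>Even superfunctions\<close>

definition esd_p :: "(complex \<Rightarrow> 'g::{finite,linorder} egrass) \<Rightarrow> complex \<Rightarrow> 'g egrass" where
  "esd_p F z = Abs_egrass (\<lambda>S. wirt_p (\<lambda>w. Rep_egrass (F w) S) z)"

definition esd_m :: "(complex \<Rightarrow> 'g::{finite,linorder} egrass) \<Rightarrow> complex \<Rightarrow> 'g egrass" where
  "esd_m F z = Abs_egrass (\<lambda>S. wirt_m (\<lambda>w. Rep_egrass (F w) S) z)"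

lemma Rep_egrass_esd:
  "Rep_egrass (esd_p F z) = (\<lambda>S. wirt_p (\<lambda>w. Rep_egrass (F w) S) z)"
  "Rep_egrass (esd_m F z) = (\<lambda>S. wirt_m (\<lambda>w. Rep_egrass (F w) S) z)"
proof -
  have odd: "(\<lambda>w. Rep_egrass (F w) S) = (\<lambda>w. 0)" if "odd (card S)" for S
    using grass_even_Rep_egrass that unfolding grass_even_def by auto
  then have "wirt_p (\<lambda>w. Rep_egrass (F w) S) z = 0 \<and> wirt_m (\<lambda>w. Rep_egrass (F w) S) z = 0"
    if "odd (card S)" for S
    using that by simp
  then have "grass_even (\<lambda>S. wirt_p (\<lambda>w. Rep_egrass (F w) S) z)"
    "grass_even (\<lambda>S. wirt_m (\<lambda>w. Rep_egrass (F w) S) z)"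
    unfolding grass_even_def by blast+
  then show "Rep_egrass (esd_p F z) = (\<lambda>S. wirt_p (\<lambda>w. Rep_egrass (F w) S) z)"
    "Rep_egrass (esd_m F z) = (\<lambda>S. wirt_m (\<lambda>w. Rep_egrass (F w) S) z)"
    unfolding esd_p_def esd_m_def by (simp_all add: Rep_egrass_Abs_egrass)
qed

lemma sd_Rep_egrass:
  "sd_p (\<lambda>w. Rep_egrass (F w)) z = Rep_egrass (esd_p F z)"
  "sd_m (\<lambda>w. Rep_egrass (F w)) z = Rep_egrass (esd_m F z)"
  unfolding Rep_egrass_esd sd_p_def sd_m_def by simp_all

definition esmooth :: "(complex \<Rightarrow> 'g::{finite,linorder} egrass) \<Rightarrow> bool" where
  "esmooth F \<longleftrightarrow> (\<forall>S. smooth (\<lambda>z. Rep_egrass (F z) S))"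

lemma Rep_egrass_times_apply:
  "Rep_egrass (x * y) S = (\<Sum>A\<in>Pow S. merge_sign A (S - A) * Rep_egrass x A * Rep_egrass y (S - A))"
  by (simp add: Rep_egrass_times gmul_def)

lemma esmooth_econst: "smooth f \<Longrightarrow> esmooth (\<lambda>z. econst (f z))"
  unfolding esmooth_def Rep_egrass_econst gconst_def
proof
  show "smooth f \<Longrightarrow> smooth (\<lambda>z. if S = {} then f z else 0)" for S
    by (cases "S = {}") (simp_all add: smooth_const)
qed

lemma esmooth_add: "esmooth F \<Longrightarrow> esmooth G \<Longrightarrow> esmooth (\<lambda>z. F z + G z)"
  unfolding esmooth_def Rep_egrass_plus gadd_def by (auto intro: smooth_add)

lemma esmooth_mult: "esmooth F \<Longrightarrow> esmooth G \<Longrightarrow> esmooth (\<lambda>z. F z * G z)"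
  unfolding esmooth_def Rep_egrass_times_apply by (auto intro!: smooth_sum smooth_mult smooth_const)

lemma esmooth_esd:
  assumes "esmooth F"
  shows "esmooth (esd_p F)" "esmooth (esd_m F)"
  using assms unfolding esmooth_def Rep_egrass_esd by (auto intro: smooth_wirt)

lemma esd_add:
  assumes "esmooth F" "esmooth G"
  shows "esd_p (\<lambda>z. F z + G z) z = esd_p F z + esd_p G z"
    "esd_m (\<lambda>z. F z + G z) z = esd_m F z + esd_m G z"
proof -
  have "has_wirt_deriv (\<lambda>w. Rep_egrass (F w) S + Rep_egrass (G w) S)
      (wirt_p (\<lambda>w. Rep_egrass (F w) S) z + wirt_p (\<lambda>w. Rep_egrass (G w) S) z)
      (wirt_m (\<lambda>w. Rep_egrass (F w) S) z + wirt_m (\<lambda>w. Rep_egrass (G w) S) z) z" for S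
    using assms unfolding esmooth_def by (intro has_wirt_deriv_add smooth_has_wirt_deriv) auto
  from has_wirt_derivD[OF this] show
    "esd_p (\<lambda>z. F z + G z) z = esd_p F z + esd_p G z"
    "esd_m (\<lambda>z. F z + G z) z = esd_m F z + esd_m G z"
    by (auto intro!: egrass_eqI simp: Rep_egrass_esd Rep_egrass_plus gadd_def)
qed

lemma esd_mult:
  assumes "esmooth F" "esmooth G"
  shows "esd_p (\<lambda>z. F z * G z) z = esd_p F z * G z + F z * esd_p G z"
    "esd_m (\<lambda>z. F z * G z) z = esd_m F z * G z + F z * esd_m G z"
proof -
  let ?f = "\<lambda>A w. Rep_egrass (F w) A" and ?g = "\<lambda>A w. Rep_egrass (G w) A"
  let ?m = "\<lambda>S A. merge_sign A (S - A)"
  have "has_wirt_deriv (\<lambda>w. \<Sum>A\<in>Pow S. ?m S A * ?f A w * ?g (S - A) w)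
      (\<Sum>A\<in>Pow S. ?m S A * wirt_p (?f A) z * ?g (S - A) z + ?m S A * ?f A z * wirt_p (?g (S - A)) z)
      (\<Sum>A\<in>Pow S. ?m S A * wirt_m (?f A) z * ?g (S - A) z + ?m S A * ?f A z * wirt_m (?g (S - A)) z) z"
    for S
  proof (rule has_wirt_deriv_sum)
    fix A
    have "has_wirt_deriv (\<lambda>w. ?m S A * ?f A w * ?g (S - A) w)
      ((?m S A * wirt_p (?f A) z) * ?g (S - A) z + (?m S A * ?f A z) * wirt_p (?g (S - A)) z)
      ((?m S A * wirt_m (?f A) z) * ?g (S - A) z + (?m S A * ?f A z) * wirt_m (?g (S - A)) z) z"
      using assms unfolding esmooth_def
      by (intro has_wirt_deriv_mult has_wirt_deriv_cmult smooth_has_wirt_deriv) auto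
    then show "has_wirt_deriv (\<lambda>w. ?m S A * ?f A w * ?g (S - A) w)
      (?m S A * wirt_p (?f A) z * ?g (S - A) z + ?m S A * ?f A z * wirt_p (?g (S - A)) z)
      (?m S A * wirt_m (?f A) z * ?g (S - A) z + ?m S A * ?f A z * wirt_m (?g (S - A)) z) z"
      by (simp add: algebra_simps)
  qed simp
  note D = has_wirt_derivD[OF this]
  show "esd_p (\<lambda>z. F z * G z) z = esd_p F z * G z + F z * esd_p G z"
    "esd_m (\<lambda>z. F z * G z) z = esd_m F z * G z + F z * esd_m G z"
    by (intro egrass_eqI ext,
        simp only: Rep_egrass_esd Rep_egrass_plus gadd_def Rep_egrass_times_apply D,
        simp add: sum.distrib algebra_simps)+
qed

lemma esd_econst:
  "esd_p (\<lambda>z. econst (f z)) z = econst (wirt_p f z)"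
  "esd_m (\<lambda>z. econst (f z)) z = econst (wirt_m f z)"
  by (intro egrass_eqI ext, simp only: Rep_egrass_esd Rep_egrass_econst, simp add: gconst_def)+

definition eholomorphic :: "(complex \<Rightarrow> 'g::{finite,linorder} egrass) \<Rightarrow> bool" where
  "eholomorphic F \<longleftrightarrow> (\<forall>S. (\<lambda>z. Rep_egrass (F z) S) holomorphic_on UNIV)"

definition eantiholomorphic :: "(complex \<Rightarrow> 'g::{finite,linorder} egrass) \<Rightarrow> bool" where
  "eantiholomorphic F \<longleftrightarrow> (\<forall>S. \<exists>h. h holomorphic_on UNIV \<and> (\<forall>z. Rep_egrass (F z) S = cnj (h z)))"

lemma eholomorphic_imp_esmooth: "eholomorphic F \<Longrightarrow> esmooth F"
  unfolding eholomorphic_def esmooth_def by (auto intro: smooth_holomorphic)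

lemma eantiholomorphic_imp_esmooth: "eantiholomorphic F \<Longrightarrow> esmooth F"
  unfolding esmooth_def
proof
  fix S assume "eantiholomorphic F"
  then obtain h where "h holomorphic_on UNIV" "\<And>z. Rep_egrass (F z) S = cnj (h z)"
    unfolding eantiholomorphic_def by blast
  then show "smooth (\<lambda>z. Rep_egrass (F z) S)"
    by (simp add: smooth_cnj smooth_holomorphic)
qed

lemma eholomorphic_esd:
  assumes "eholomorphic F"
  shows "esd_m F z = 0" "eholomorphic (esd_p F)"
proof -
  have "wirt_m (\<lambda>w. Rep_egrass (F w) S) = (\<lambda>z. 0)" "wirt_p (\<lambda>w. Rep_egrass (F w) S) = deriv (\<lambda>w. Rep_egrass (F w) S)"
    "deriv (\<lambda>w. Rep_egrass (F w) S) holomorphic_on UNIV" for S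
    using assms unfolding eholomorphic_def by (simp_all add: wirt_holomorphic holomorphic_deriv)
  then show "esd_m F z = 0" "eholomorphic (esd_p F)"
    unfolding eholomorphic_def
    by (simp_all add: egrass_eqI Rep_egrass_esd Rep_egrass_zero gconst_def fun_eq_iff)
qed

lemma eantiholomorphic_esd:
  assumes "eantiholomorphic F"
  shows "esd_p F z = 0" "eantiholomorphic (esd_m F)"
proof -
  have wirt: "wirt_p (\<lambda>w. Rep_egrass (F w) S) z = 0 \<and>
      (\<exists>h. h holomorphic_on UNIV \<and> (\<forall>z. wirt_m (\<lambda>w. Rep_egrass (F w) S) z = cnj (h z)))" for S z
  proof -
    obtain h where h: "h holomorphic_on UNIV" "\<And>z. Rep_egrass (F z) S = cnj (h z)"
      using assms unfolding eantiholomorphic_def by blast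
    have "wirt_p (\<lambda>w. Rep_egrass (F w) S) z = 0" "wirt_m (\<lambda>w. Rep_egrass (F w) S) z = cnj (deriv h z)" for z
      using wirt_cnj[OF has_wirt_deriv_imp_differentiable[OF holomorphic_imp_has_wirt_deriv[OF h(1)]]]
      by (simp_all add: h(2) wirt_holomorphic[OF h(1)])
    then show ?thesis
      using holomorphic_deriv[OF h(1)] by blast
  qed
  then show "esd_p F z = 0"
    by (simp add: egrass_eqI Rep_egrass_esd Rep_egrass_zero gconst_def fun_eq_iff)
  show "eantiholomorphic (esd_m F)"
    unfolding eantiholomorphic_def Rep_egrass_esd using wirt by blast
qed

definition gen_divides :: "'g \<Rightarrow> 'g::{finite,linorder} egrass \<Rightarrow> bool" where
  "gen_divides t x \<longleftrightarrow> (\<forall>S. Rep_egrass x S \<noteq> 0 \<longrightarrow> t \<in> S)"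

lemma gen_divides_mult_eq_0:
  assumes "gen_divides t x" "gen_divides t y"
  shows "x * y = 0"
proof -
  have "gmul (Rep_egrass x) (Rep_egrass y) = (\<lambda>S. 0)"
    using assms unfolding gen_divides_def by (intro gmul_common_generator) auto
  then show ?thesis
    by (intro egrass_eqI) (simp add: Rep_egrass_times Rep_egrass_zero gconst_def fun_eq_iff)
qed

lemma gen_divides_gbody: "gen_divides t x \<Longrightarrow> gbody (Rep_egrass x) = 0"
  unfolding gen_divides_def gbody_def by auto

lemma gen_divides_esd:
  assumes "\<And>w. gen_divides t (F w)"
  shows "gen_divides t (esd_p F z)" "gen_divides t (esd_m F z)"
proof -
  have "(\<lambda>w. Rep_egrass (F w) S) = (\<lambda>w. 0)" if "t \<notin> S" for S
    using assms that unfolding gen_divides_def by auto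
  then have "wirt_p (\<lambda>w. Rep_egrass (F w) S) z = 0 \<and> wirt_m (\<lambda>w. Rep_egrass (F w) S) z = 0"
    if "t \<notin> S" for S
    using that by simp
  then show "gen_divides t (esd_p F z)" "gen_divides t (esd_m F z)"
    unfolding gen_divides_def Rep_egrass_esd by blast+
qed

section \<open>Jets\<close>

definition jet :: "(complex \<Rightarrow> complex) \<Rightarrow> complex \<Rightarrow> tjet" where
  "jet f z = tpoly (f z) (wirt_p f z) (wirt_m f z) (wirt_p (wirt_m f) z)"

lemma jet_const: "jet (\<lambda>z. c) z = tconst c"
  unfolding jet_def tpoly_def tconst_def by (simp add: zero_dual2_def)

lemma jet_add:
  assumes f: "smooth f" and g: "smooth g"
  shows "jet (\<lambda>z. f z + g z) z = jet f z + jet g z"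
proof -
  have "wirt_m (\<lambda>z. f z + g z) = (\<lambda>z. wirt_m f z + wirt_m g z)"
    using f g by (simp add: fun_eq_iff wirt_add smooth_differentiable)
  then show ?thesis
    using f g smooth_wirt
    by (simp add: jet_def tpoly_def wirt_add smooth_differentiable zero_dual2_def)
qed

lemma jet_mult:
  assumes f: "smooth f" and g: "smooth g"
  shows "jet (\<lambda>z. f z * g z) z = jet f z * jet g z"
proof -
  have "wirt_m (\<lambda>z. f z * g z) = (\<lambda>z. wirt_m f z * g z + f z * wirt_m g z)"
    using f g by (simp add: fun_eq_iff wirt_mult smooth_differentiable)
  then show ?thesis
    using f g smooth_wirt
    by (simp add: jet_def tpoly_def wirt_add wirt_mult smooth_differentiable zero_dual2_def algebra_simps)
qed

lemma jet_sum:
  "finite A \<Longrightarrow> (\<And>i. i \<in> A \<Longrightarrow> smooth (f i)) \<Longrightarrow> jet (\<lambda>z. \<Sum>i\<in>A. f i z) z = (\<Sum>i\<in>A. jet (f i) z)"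
proof (induction A rule: finite_induct)
  case empty
  then show ?case
    by (simp add: jet_const tconst_def zero_dual2_def)
next
  case (insert a A)
  then show ?case
    by (simp add: jet_add smooth_sum)
qed

lemma jet_prod:
  "finite A \<Longrightarrow> (\<And>i. i \<in> A \<Longrightarrow> smooth (f i)) \<Longrightarrow> jet (\<lambda>z. \<Prod>i\<in>A. f i z) z = (\<Prod>i\<in>A. jet (f i) z)"
proof (induction A rule: finite_induct)
  case empty
  then show ?case
    by (simp add: jet_const tconst_def one_dual2_def zero_dual2_def)
next
  case (insert a A)
  then show ?case
    by (simp add: jet_mult smooth_prod)
qed

lemma jet_cmult: "smooth f \<Longrightarrow> jet (\<lambda>z. c * f z) z = tconst c * jet f z"
  using jet_mult[OF smooth_const] by (simp add: jet_const)

lemma jet_holomorphic: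
  assumes "h holomorphic_on UNIV"
  shows "jet h z = tpoly (h z) (wirt_p h z) 0 0"
    "jet (\<lambda>z. cnj (h z)) z = tpoly (cnj (h z)) 0 (cnj (wirt_p h z)) 0"
proof -
  have d: "f differentiable (at z)" if "f holomorphic_on UNIV" for f z
    using has_wirt_deriv_imp_differentiable[OF holomorphic_imp_has_wirt_deriv[OF that]] .
  have "deriv h holomorphic_on UNIV"
    using assms holomorphic_deriv by blast
  then have "wirt_m (\<lambda>z. cnj (h z)) = (\<lambda>z. cnj (deriv h z))" "wirt_m (deriv h) = (\<lambda>z. 0)"
    using assms d by (simp_all add: fun_eq_iff wirt_cnj wirt_holomorphic)
  then show "jet h z = tpoly (h z) (wirt_p h z) 0 0"
    "jet (\<lambda>z. cnj (h z)) z = tpoly (cnj (h z)) 0 (cnj (wirt_p h z)) 0"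
    using assms d \<open>deriv h holomorphic_on UNIV\<close>
    by (simp_all add: jet_def wirt_cnj wirt_holomorphic)
qed

lemma permutes_atLeast0LessThan_less: "p permutes {0..<m} \<Longrightarrow> i < m \<Longrightarrow> p i < (m :: nat)"
  using permutes_in_image[of p "{0..<m}" i] by simp

lemma smooth_cdet:
  "(\<And>i j. i < m \<Longrightarrow> j < m \<Longrightarrow> smooth (\<lambda>z. A z i j)) \<Longrightarrow> smooth (\<lambda>z. cdet m (A z))"
  unfolding cdet_def
  by (intro smooth_sum smooth_cmult smooth_prod) (auto simp: finite_permutations permutes_atLeast0LessThan_less)

lemma jet_cdet:
  assumes "\<And>i j. i < m \<Longrightarrow> j < m \<Longrightarrow> smooth (\<lambda>z. A z i j)"
  shows "jet (\<lambda>z. cdet m (A z)) z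
    = (\<Sum>p\<in>{p. p permutes {0..<m}}. tconst (of_int (sign p)) * (\<Prod>i<m. jet (\<lambda>z. A z i (p i)) z))"
proof -
  have smooth: "smooth (\<lambda>z. A z i (p i))" if "p permutes {0..<m}" "i < m" for p i
    using assms that by (simp add: permutes_atLeast0LessThan_less)
  have "jet (\<lambda>z. cdet m (A z)) z
      = (\<Sum>p\<in>{p. p permutes {0..<m}}. jet (\<lambda>z. of_int (sign p) * (\<Prod>i<m. A z i (p i))) z)"
    unfolding cdet_def using smooth
    by (intro jet_sum) (auto intro!: smooth_cmult smooth_prod simp: finite_permutations)
  also have "\<dots> = (\<Sum>p\<in>{p. p permutes {0..<m}}. tconst (of_int (sign p)) * (\<Prod>i<m. jet (\<lambda>z. A z i (p i)) z))"
  proof (intro sum.cong refl)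
    fix p assume "p \<in> {p. p permutes {0..<m}}"
    then have "\<And>i. i \<in> {..<m} \<Longrightarrow> smooth (\<lambda>z. A z i (p i))"
      using smooth by auto
    then show "jet (\<lambda>z. of_int (sign p) * (\<Prod>i<m. A z i (p i))) z
        = tconst (of_int (sign p)) * (\<Prod>i<m. jet (\<lambda>z. A z i (p i)) z)"
      by (simp only: jet_cmult[OF smooth_prod] jet_prod finite_lessThan)
  qed
  finally show ?thesis .
qed

lemma real_nonvanishing_sign:
  fixes f :: "complex \<Rightarrow> complex"
  assumes cont: "continuous_on UNIV f" and real: "\<And>z. f z \<in> \<real>" and nz: "\<And>z. f z \<noteq> 0"
  shows "(\<forall>z. Re (f z) > 0) \<or> (\<forall>z. Re (f z) < 0)"
proof (rule ccontr)
  have Re: "Re (f z) \<noteq> 0" for z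
    using real[of z] nz[of z] by (auto simp: complex_is_Real_iff complex_eq_iff)
  assume "\<not> ?thesis"
  then obtain z1 z2 where "Re (f z1) < 0" "Re (f z2) > 0"
    using Re by (meson linorder_neqE_linordered_idom)
  moreover have "continuous_on {0..1} (\<lambda>t. Re (f (z1 + of_real t * (z2 - z1))))"
    by (intro continuous_intros continuous_on_compose2[OF cont]) auto
  ultimately obtain t where "Re (f (z1 + of_real t * (z2 - z1))) = 0"
    using IVT'[of "\<lambda>t. Re (f (z1 + of_real t * (z2 - z1)))" 0 0 1] by auto
  then show False
    using Re by blast
qed

text \<open>A real nonvanishing function has constant sign, so up to an additive constant \<open>Ln \<circ> f\<close>
  agrees with \<open>Ln \<circ> (\<plusminus>f)\<close>, which avoids the branch cut.\<close>

lemma Ln_real_nonvanishing: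
  assumes "smooth f" "\<And>z. f z \<in> \<real>" "\<And>z. f z \<noteq> 0"
  obtains s c where "s \<noteq> 0" "\<And>z. s * f z \<notin> \<real>\<^sub>\<le>\<^sub>0" "\<And>z. Ln (f z) = Ln (s * f z) + c"
proof -
  have Im: "Im (f z) = 0" for z
    using assms(2) by (simp add: complex_is_Real_iff)
  have "continuous_on UNIV f"
    using smooth_differentiable[OF assms(1)]
    by (simp add: continuous_at_imp_continuous_on differentiable_imp_continuous_within)
  then consider "\<forall>z. Re (f z) > 0" | "\<forall>z. Re (f z) < 0"
    using real_nonvanishing_sign assms(2,3) by blast
  then show ?thesis
  proof cases
    case 1
    then have "1 * f z \<notin> \<real>\<^sub>\<le>\<^sub>0" for z
      by (simp add: complex_nonpos_Reals_iff not_le)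
    then show ?thesis
      using that[of 1 0] by simp
  next
    case 2
    then have "- 1 * f z \<notin> \<real>\<^sub>\<le>\<^sub>0" for z
      by (simp add: complex_nonpos_Reals_iff not_le)
    moreover have "Ln (f z) = Ln (- 1 * f z) + \<i> * pi" for z
    proof -
      have "Re (- f z) > 0"
        using 2 by simp
      then show ?thesis
        using Ln_minus[of "- f z"] assms(3)[of z] Im[of z] by auto
    qed
    ultimately show ?thesis
      using that[of "-1" "\<i> * pi"] by simp
  qed
qed

lemma
  assumes "smooth f" "\<And>z. f z \<in> \<real>" "\<And>z. f z \<noteq> 0"
  shows smooth_Ln_real: "smooth (\<lambda>z. Ln (f z))"
    and has_wirt_deriv_Ln_real: "has_wirt_deriv (\<lambda>z. Ln (f z)) (wirt_p f z / f z) (wirt_m f z / f z) z"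
proof -
  obtain s c where s: "s \<noteq> 0" "\<And>z. s * f z \<notin> \<real>\<^sub>\<le>\<^sub>0" and Ln: "\<And>z. Ln (f z) = Ln (s * f z) + c"
    using Ln_real_nonvanishing[OF assms] by blast
  show "smooth (\<lambda>z. Ln (f z))"
    unfolding Ln by (intro smooth_add smooth_Ln smooth_cmult smooth_const assms(1) s(2))
  have "has_wirt_deriv (\<lambda>z. Ln (s * f z) + c) (s * wirt_p f z / (s * f z) + 0) (s * wirt_m f z / (s * f z) + 0) z"
    by (intro has_wirt_deriv_add has_wirt_deriv_Ln has_wirt_deriv_cmult has_wirt_deriv_const
        smooth_has_wirt_deriv assms(1) s(2))
  then show "has_wirt_deriv (\<lambda>z. Ln (f z)) (wirt_p f z / f z) (wirt_m f z / f z) z"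
    unfolding Ln using s(1) by simp
qed

lemma jet_Ln_real:
  assumes f: "smooth f" "\<And>z. f z \<in> \<real>" and nz: "\<And>z. f z \<noteq> 0"
  shows "jet (\<lambda>z. Ln (f z)) z = tpoly (Ln (f z)) (wirt_p f z / f z) (wirt_m f z / f z)
      (wirt_p (wirt_m f) z / f z - wirt_p f z * wirt_m f z / (f z)\<^sup>2)"
proof -
  have "wirt_p (\<lambda>z. Ln (f z)) = (\<lambda>z. wirt_p f z / f z)" "wirt_m (\<lambda>z. Ln (f z)) = (\<lambda>z. wirt_m f z / f z)"
    using has_wirt_derivD[OF has_wirt_deriv_Ln_real[OF assms]] by (simp_all add: fun_eq_iff)
  then show ?thesis
    using smooth_differentiable smooth_wirt f nz
    by (simp add: jet_def wirt_divide smooth_wirt_commute power2_eq_square field_simps)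
qed

lemma wirt_real:
  assumes f: "smooth f" and real: "\<And>z. f z \<in> \<real>"
  shows "cnj (wirt_p f z) = wirt_m f z" "wirt_p (wirt_m f) z \<in> \<real>"
proof -
  have ff: "(\<lambda>z. cnj (f z)) = f"
    using real by (simp add: fun_eq_iff Reals_cnj_iff)
  have p: "cnj (wirt_p f w) = wirt_m f w" for w
    using wirt_cnj(2)[OF smooth_differentiable[OF f], of w] unfolding ff ..
  then show "cnj (wirt_p f z) = wirt_m f z" .
  have "cnj (wirt_p (wirt_m f) z) = wirt_m (\<lambda>w. cnj (wirt_m f w)) z"
    using wirt_cnj(2)[OF smooth_differentiable[OF smooth_wirt(2)[OF f]], of z] by simp
  also have "(\<lambda>w. cnj (wirt_m f w)) = wirt_p f"
    using arg_cong[OF p, of cnj] by (simp add: fun_eq_iff)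
  also have "wirt_m (wirt_p f) z = wirt_p (wirt_m f) z"
    using smooth_wirt_commute[OF f] by simp
  finally show "wirt_p (wirt_m f) z \<in> \<real>"
    by (simp add: Reals_cnj_iff)
qed

lemma wirt_pm_Ln_real:
  assumes f: "smooth f" "\<And>z. f z \<in> \<real>" and nz: "\<And>z. f z \<noteq> 0"
  shows "wirt_p (wirt_m (\<lambda>z. Ln (f z))) z \<in> \<real>"
proof -
  have "wirt_p (wirt_m (\<lambda>z. Ln (f z))) z = wirt_p (wirt_m f) z / f z - wirt_p f z * wirt_m f z / (f z)\<^sup>2"
    using jet_Ln_real[OF assms, of z] unfolding jet_def tpoly_def by simp
  moreover have "wirt_p f z * wirt_m f z \<in> \<real>"
    using wirt_real(1)[OF f] by (metis Reals_cnj_iff complex_cnj_mult complex_cnj_cnj mult.commute)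
  ultimately show ?thesis
    using wirt_real(2)[OF f] f(2) by (simp add: Reals_divide Reals_diff Reals_power)
qed

lemma cdet_transpose: "cdet m (\<lambda>i j. A j i) = cdet m A"
proof -
  let ?S = "{p. p permutes {0..<m}}"
  have "cdet m (\<lambda>i j. A j i) = (\<Sum>p\<in>?S. of_int (sign (inv p)) * (\<Prod>i<m. A i (inv p i)))"
    unfolding cdet_def
  proof (rule sum.cong[OF refl])
    fix p assume "p \<in> ?S"
    then have p: "p permutes {..<m}"
      by (simp add: atLeast0LessThan)
    then have "sign (inv p) = sign p"
      by (metis finite_lessThan permutation_permutes sign_inverse)
    moreover have "(\<Prod>i<m. A i (inv p i)) = (\<Prod>i<m. A (p i) i)"
      using prod.permute[OF p, of "\<lambda>i. A i (inv p i)"] permutes_inverses(2)[OF p] by simp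
    ultimately show "of_int (sign p) * (\<Prod>i<m. A (p i) i) = of_int (sign (inv p)) * (\<Prod>i<m. A i (inv p i))"
      by simp
  qed
  also have "\<dots> = cdet m A"
    unfolding cdet_def
    by (rule sum.reindex_bij_witness[where i = inv and j = inv]) (auto simp: permutes_inv permutes_inv_inv)
  finally show ?thesis .
qed

lemma cdet_ZdZ_real: "cdet M (ZdZ N Z z) \<in> \<real>"
proof -
  have "cnj (cdet M (ZdZ N Z z)) = cdet M (\<lambda>i j. cnj (ZdZ N Z z i j))"
    unfolding cdet_def by (simp add: cnj_sum cnj_prod)
  also have "(\<lambda>i j. cnj (ZdZ N Z z i j)) = (\<lambda>i j. ZdZ N Z z j i)"
    unfolding ZdZ_def by (auto simp: mult.commute)
  also have "cdet M \<dots> = cdet M (ZdZ N Z z)"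
    by (rule cdet_transpose)
  finally show ?thesis
    by (simp add: Reals_cnj_iff)
qed

lemma smooth_ZdZ:
  assumes "\<And>j. j < N \<Longrightarrow> (\<lambda>z. Z z j i) holomorphic_on UNIV" "\<And>j. j < N \<Longrightarrow> (\<lambda>z. Z z j k) holomorphic_on UNIV"
  shows "smooth (\<lambda>z. ZdZ N Z z i k)"
  unfolding ZdZ_def using assms by (intro smooth_sum smooth_mult smooth_cnj smooth_holomorphic) auto

section \<open>The supersymmetric extension\<close>

locale susy_extension =
  fixes \<theta>p \<theta>m :: "'g::{finite,linorder}" and \<sigma> :: "'g \<Rightarrow> 'g" and \<eta> :: "complex \<Rightarrow> 'g grass"
  assumes theta_distinct: "\<theta>p \<noteq> \<theta>m"
    and sigma_inv: "\<And>a. \<sigma> (\<sigma> a) = a"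
    and sigma_theta: "\<sigma> \<theta>p = \<theta>m"
    and eta_holo: "\<And>S. (\<lambda>z. \<eta> z S) holomorphic_on UNIV"
    and eta_odd: "\<And>z S. \<eta> z S \<noteq> 0 \<Longrightarrow> odd (card S)"
begin

lemma card_generators: "CARD('g) \<ge> 2"
  using card_mono[of UNIV "{\<theta>p, \<theta>m}"] theta_distinct by simp

definition shift_p :: "complex \<Rightarrow> 'g egrass" where
  "shift_p z = Abs_egrass (gscale \<i> (gmul (gen \<theta>p) (\<eta> z)))"

definition shift_m :: "complex \<Rightarrow> 'g egrass" where
  "shift_m z = Abs_egrass (gconj \<sigma> (Rep_egrass (shift_p z)))"

definition dshift_p :: "complex \<Rightarrow> 'g egrass" where
  "dshift_p = esd_p shift_p"

definition dshift_m :: "complex \<Rightarrow> 'g egrass" where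
  "dshift_m = esd_m shift_m"

lemma Rep_egrass_shift_p: "Rep_egrass (shift_p z) = gscale \<i> (gmul (gen \<theta>p) (\<eta> z))"
proof -
  have "even (card S)" if "gmul (gen \<theta>p) (\<eta> z) S \<noteq> 0" for S
  proof -
    have "odd (card S) = (True \<noteq> True)"
      by (rule gmul_parity[OF _ _ that]) (auto simp: gen_def eta_odd split: if_splits)
    then show ?thesis
      by simp
  qed
  then have "grass_even (gmul (gen \<theta>p) (\<eta> z))"
    unfolding grass_even_def by blast
  then show ?thesis
    unfolding shift_p_def by (simp add: Rep_egrass_Abs_egrass grass_even_gscale)
qed

lemma gconj_apply:
  "gconj \<sigma> x T = (-1) ^ card {(a, b). a \<in> \<sigma> ` T \<and> b \<in> \<sigma> ` T \<and> a < b \<and> \<sigma> a < \<sigma> b} * cnj (x (\<sigma> ` T))"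
  unfolding gconj_def by (simp add: Let_def)

lemma card_sigma_image: "card (\<sigma> ` T) = card T"
  by (metis card_image injI inj_on_subset subset_UNIV sigma_inv)

lemma Rep_egrass_shift_m: "Rep_egrass (shift_m z) = gconj \<sigma> (Rep_egrass (shift_p z))"
proof -
  have "grass_even (gconj \<sigma> (Rep_egrass (shift_p z)))"
    using grass_even_Rep_egrass[of "shift_p z"]
    unfolding grass_even_def gconj_apply by (auto simp: card_sigma_image)
  then show ?thesis
    unfolding shift_m_def by (simp add: Rep_egrass_Abs_egrass)
qed

lemma eholomorphic_shift_p: "eholomorphic shift_p"
  unfolding eholomorphic_def Rep_egrass_shift_p gscale_def gmul_def
  by (intro allI holomorphic_intros holomorphic_on_sum eta_holo)

lemma eantiholomorphic_shift_m: "eantiholomorphic shift_m"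
  unfolding eantiholomorphic_def
proof
  fix T
  let ?s = "(-1) ^ card {(a, b). a \<in> \<sigma> ` T \<and> b \<in> \<sigma> ` T \<and> a < b \<and> \<sigma> a < \<sigma> b} :: complex"
  have "Rep_egrass (shift_m z) T = cnj (?s * Rep_egrass (shift_p z) (\<sigma> ` T))" for z
    unfolding Rep_egrass_shift_m gconj_apply by simp
  moreover have "(\<lambda>z. ?s * Rep_egrass (shift_p z) (\<sigma> ` T)) holomorphic_on UNIV"
    using eholomorphic_shift_p unfolding eholomorphic_def by (intro holomorphic_intros) auto
  ultimately show "\<exists>h. h holomorphic_on UNIV \<and> (\<forall>z. Rep_egrass (shift_m z) T = cnj (h z))"
    by blast
qed

lemma gen_divides_shift: "gen_divides \<theta>p (shift_p z)" "gen_divides \<theta>m (shift_m z)"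
proof -
  have p: "Rep_egrass (shift_p z) S \<noteq> 0 \<Longrightarrow> \<theta>p \<in> S" for z S
    unfolding Rep_egrass_shift_p gscale_def
    by (auto intro: gmul_support_left[of "gen \<theta>p" \<theta>p] simp: gen_def split: if_splits)
  then show "gen_divides \<theta>p (shift_p z)"
    unfolding gen_divides_def by blast
  have "\<theta>m \<in> T" if "Rep_egrass (shift_m z) T \<noteq> 0" for T
  proof -
    have "\<theta>p \<in> \<sigma> ` T"
      using that p unfolding Rep_egrass_shift_m gconj_apply by fastforce
    then show ?thesis
      using sigma_inv sigma_theta by force
  qed
  then show "gen_divides \<theta>m (shift_m z)"
    unfolding gen_divides_def by blast
qed

lemma eholomorphic_dshift_p: "eholomorphic dshift_p"
  and eantiholomorphic_dshift_m: "eantiholomorphic dshift_m"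
  unfolding dshift_p_def dshift_m_def
  by (simp_all add: eholomorphic_esd eholomorphic_shift_p eantiholomorphic_esd eantiholomorphic_shift_m)

lemma gen_divides_dshift: "gen_divides \<theta>p (dshift_p z)" "gen_divides \<theta>m (dshift_m z)"
  unfolding dshift_p_def dshift_m_def by (simp_all add: gen_divides_esd gen_divides_shift)

lemmas shift_products_eq_0 =
  gen_divides_mult_eq_0[OF gen_divides_shift(1) gen_divides_shift(1)]
  gen_divides_mult_eq_0[OF gen_divides_shift(1) gen_divides_dshift(1)]
  gen_divides_mult_eq_0[OF gen_divides_dshift(1) gen_divides_dshift(1)]
  gen_divides_mult_eq_0[OF gen_divides_shift(2) gen_divides_shift(2)]
  gen_divides_mult_eq_0[OF gen_divides_shift(2) gen_divides_dshift(2)]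
  gen_divides_mult_eq_0[OF gen_divides_dshift(2) gen_divides_dshift(2)]

text \<open>\<^term>\<open>super_eval z\<close> substitutes the shifts into jets: \<open>u\<^sub>1, v\<^sub>1, u\<^sub>2, v\<^sub>2\<close> go to
  \<open>p = i\<theta>\<^sub>+\<eta>\<close>, \<open>\<partial>\<^sub>+p\<close>, \<open>q = p\<^sup>\<dagger>\<close>, \<open>\<partial>\<^sub>-q\<close>, so that the jet of \<open>f\<close> becomes the Taylor expansion
  of \<open>f (x\<^sub>+ + p, x\<^sub>- + q)\<close>.\<close>

definition super_eval :: "complex \<Rightarrow> tjet \<Rightarrow> 'g egrass" where
  "super_eval z = dual2_eval (dual2_eval econst (shift_p z) (dshift_p z)) (shift_m z) (dshift_m z)"

sublocale super_eval: comm_ring_hom "super_eval z" for z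
  unfolding super_eval_def
  by (intro comm_ring_hom_dual2_eval econst.comm_ring_hom_axioms) (simp_all add: shift_products_eq_0)

lemma super_eval_tconst: "super_eval z (tconst c) = econst c"
  unfolding super_eval_def tconst_def by (simp add: zero_dual2_def econst.hom_zero)

lemma super_eval_tpoly:
  "super_eval z (tpoly a b c d) = econst a + econst b * shift_p z + (econst c + econst d * shift_p z) * shift_m z"
  unfolding super_eval_def tpoly_def by (simp add: zero_dual2_def econst.hom_zero)

lemma gbody_super_eval: "gbody (Rep_egrass (super_eval z X)) = tbody X"
proof -
  obtain a b c B C where X: "X = Dual2 (Dual2 a b c) B C"
    by (metis dual2.exhaust)
  have "gbody (Rep_egrass x) = 0" if "x \<in> {shift_p z, dshift_p z, shift_m z, dshift_m z}" for x
    using that gen_divides_gbody gen_divides_shift gen_divides_dshift by blast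
  then show ?thesis
    unfolding X super_eval_def
    by (cases B; cases C) (simp add: gbody_Rep_egrass_plus gbody_Rep_egrass_times gbody_Rep_egrass_econst)
qed

lemma super_eval_body_soul:
  "super_eval z X = econst (tbody X) + super_eval z (X - tconst (tbody X))"
  "gbody (Rep_egrass (super_eval z (X - tconst (tbody X)))) = 0"
  "super_eval z (X - tconst (tbody X)) ^ 3 = 0"
proof -
  show "super_eval z X = econst (tbody X) + super_eval z (X - tconst (tbody X))"
    by (simp add: super_eval.hom_diff super_eval_tconst)
  show "gbody (Rep_egrass (super_eval z (X - tconst (tbody X)))) = 0"
    unfolding gbody_super_eval tbody_diff_tconst ..
  show "super_eval z (X - tconst (tbody X)) ^ 3 = 0"
    unfolding super_eval.hom_power[symmetric] tbody_zero_imp_cube_zero[OF tbody_diff_tconst]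
    by (rule super_eval.hom_zero)
qed

lemma gln_super_eval:
  assumes "g \<noteq> 0"
  shows "gln (Rep_egrass (super_eval z (tpoly g a b d * tfactor t)))
    = Rep_egrass (super_eval z (tpoly (Ln g) (a / g) (b / g) (d / g - a * b / g\<^sup>2))
        + econst t * (dshift_p z + dshift_m z))"
proof -
  define X where "X = tpoly g a b d * tfactor t"
  have body: "tbody X = g"
    unfolding X_def tpoly_def tfactor_def by simp
  have "gln (Rep_egrass (super_eval z X)) = Rep_egrass (super_eval z (tconst (Ln g)
      + tconst (1 / g) * (X - tconst g) - tconst (1 / (2 * g\<^sup>2)) * (X - tconst g)\<^sup>2))"
    using gln_econst_plus[OF super_eval_body_soul(2,3)[of z X] card_generators, of g]
    unfolding super_eval_body_soul(1)[of z X] body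
    by (simp add: super_eval.hom_add super_eval.hom_diff super_eval.hom_mult super_eval.hom_power
        super_eval_tconst)
  also have "\<dots> = Rep_egrass (super_eval z (tpoly (Ln g) (a / g) (b / g) (d / g - a * b / g\<^sup>2))
        + econst t * (dshift_p z + dshift_m z))"
    unfolding X_def tln_tpoly_tfactor[OF assms] super_eval.hom_add
    by (simp add: super_eval_def zero_dual2_def econst.hom_zero algebra_simps)
  finally show ?thesis
    unfolding X_def .
qed

lemma ginv_super_eval:
  assumes "tbody X \<noteq> 0"
  shows "gmul (ginv (Rep_egrass (super_eval z X))) (Rep_egrass (super_eval z X)) = gconst 1"
  using ginv_econst_plus[OF super_eval_body_soul(2,3)[of z X] card_generators assms]
  unfolding super_eval_body_soul(1)[of z X, symmetric] .

lemma super_eval_jet: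
  "super_eval z (jet f z) = econst (f z) + econst (wirt_p f z) * shift_p z
     + (econst (wirt_m f z) + econst (wirt_p (wirt_m f) z) * shift_p z) * shift_m z"
  unfolding jet_def super_eval_tpoly ..

lemma super_eval_tpoly_tfactor_1:
  "super_eval z (tpoly a b c d * tfactor 1) =
    econst a + econst b * shift_p z + econst a * dshift_p z
    + (econst c + econst d * shift_p z + econst c * dshift_p z) * shift_m z
    + (econst a + econst b * shift_p z + econst a * dshift_p z) * dshift_m z"
  unfolding super_eval_def tpoly_def tfactor_def by (simp add: econst.hom_zero)

lemma esmooth_super_eval_jet: "smooth f \<Longrightarrow> esmooth (\<lambda>z. super_eval z (jet f z))"
  unfolding super_eval_jet
  by (intro esmooth_add esmooth_mult esmooth_econst eholomorphic_imp_esmooth eholomorphic_shift_p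
      eantiholomorphic_imp_esmooth eantiholomorphic_shift_m smooth_wirt; assumption?)

lemma esd_super_eval_jet:
  assumes f: "smooth f"
  shows "esd_p (esd_m (\<lambda>w. super_eval w (jet f w))) z = super_eval z (jet (wirt_p (wirt_m f)) z * tfactor 1)"
proof -
  define fp fm fpm where "fp = wirt_p f" and "fm = wirt_m f" and "fpm = wirt_p fm"
  have smooth: "smooth fp" "smooth fm" "smooth fpm" "smooth (wirt_m fp)" "smooth (wirt_m fm)"
    "smooth (wirt_m fpm)"
    unfolding fp_def fm_def fpm_def using f by (auto intro!: smooth_wirt)
  have es: "esmooth shift_p" "esmooth shift_m" "esmooth dshift_m"
    by (simp_all add: eholomorphic_imp_esmooth eholomorphic_shift_p eantiholomorphic_imp_esmooth
        eantiholomorphic_shift_m eantiholomorphic_dshift_m)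
  have esd: "esd_m shift_p w = 0" "esd_p shift_m w = 0" "esd_p dshift_m w = 0" for w
    by (simp_all add: eholomorphic_esd eholomorphic_shift_p eantiholomorphic_esd
        eantiholomorphic_shift_m eantiholomorphic_dshift_m)
  have "esd_m (\<lambda>w. super_eval w (jet f w)) = (\<lambda>w. econst (fm w) + econst (wirt_m fp w) * shift_p w
      + (econst (wirt_m fm w) + econst (wirt_m fpm w) * shift_p w) * shift_m w
      + (econst (fm w) + econst (fpm w) * shift_p w) * dshift_m w)"
    unfolding super_eval_jet fp_def[symmetric] fm_def[symmetric] fpm_def[symmetric]
    by (simp add: fun_eq_iff esd_add esd_mult esd_econst esmooth_add esmooth_mult esmooth_econst
        f smooth es esd fm_def[symmetric] fpm_def[symmetric] dshift_m_def[symmetric] algebra_simps)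
  moreover have "wirt_m fp = fpm" "wirt_p (wirt_m fm) = wirt_m fpm"
    unfolding fp_def fm_def fpm_def using smooth_wirt_commute f smooth_wirt by auto
  ultimately show ?thesis
    unfolding super_eval_jet[of _ fpm] jet_def super_eval_tpoly_tfactor_1 fm_def[symmetric] fpm_def[symmetric]
    by (simp add: esd_add esd_mult esd_econst esmooth_add esmooth_mult esmooth_econst esmooth_esd
        f smooth smooth_wirt es esd dshift_p_def[symmetric] fm_def[symmetric] fpm_def[symmetric] algebra_simps)
qed

lemma superW_eq:
  "superW \<theta>p \<eta> Z z i j = Rep_egrass (econst (Z z i j) + econst (wirt_p (\<lambda>w. Z w i j) z) * shift_p z)"
  unfolding superW_def Rep_egrass_shift_p[symmetric]
  by (simp add: Rep_egrass_plus Rep_egrass_times Rep_egrass_econst gmul_gconst_right gmul_gconst_left)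

lemma gconj_Rep_egrass_shift_p:
  "gconj \<sigma> (Rep_egrass (econst a + econst b * shift_p z)) = Rep_egrass (econst (cnj a) + econst (cnj b) * shift_m z)"
proof -
  have "gconj \<sigma> (gadd x y) = gadd (gconj \<sigma> x) (gconj \<sigma> y)" "gconj \<sigma> (gscale c x) = gscale (cnj c) (gconj \<sigma> x)"
    "gconj \<sigma> (gconst c) = gconst (cnj c)" for x y c
    unfolding gconj_def gadd_def gscale_def gconst_def by (auto simp: Let_def fun_eq_iff algebra_simps)
  then show ?thesis
    by (simp add: Rep_egrass_plus Rep_egrass_econst Rep_egrass_shift_m flip: gscale_Rep_egrass)
qed

lemma WdW_superW_eq:
  assumes holo: "\<And>j. j < N \<Longrightarrow> (\<lambda>z. Z z j i) holomorphic_on UNIV" "\<And>j. j < N \<Longrightarrow> (\<lambda>z. Z z j k) holomorphic_on UNIV"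
  shows "WdW N \<sigma> (superW \<theta>p \<eta> Z) z i k = Rep_egrass (super_eval z (jet (\<lambda>z. ZdZ N Z z i k) z))"
proof -
  have "WdW N \<sigma> (superW \<theta>p \<eta> Z) z i k
      = Rep_egrass (\<Sum>j<N. super_eval z (jet (\<lambda>z. cnj (Z z j i)) z) * super_eval z (jet (\<lambda>z. Z z j k) z))"
    unfolding WdW_def superW_eq gconj_Rep_egrass_shift_p
    by (simp add: Rep_egrass_sum Rep_egrass_times gsum_def jet_holomorphic holo super_eval_tpoly
        econst.hom_zero)
  also have "\<dots> = Rep_egrass (super_eval z (\<Sum>j<N. jet (\<lambda>z. cnj (Z z j i) * Z z j k) z))"
    using holo by (simp add: jet_mult smooth_holomorphic smooth_cnj super_eval.hom_sum super_eval.hom_mult)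
  also have "(\<Sum>j<N. jet (\<lambda>z. cnj (Z z j i) * Z z j k) z) = jet (\<lambda>z. ZdZ N Z z i k) z"
    unfolding ZdZ_def using holo
    by (intro jet_sum[symmetric]) (simp_all add: smooth_mult smooth_holomorphic smooth_cnj)
  finally show ?thesis .
qed

lemma gdet_WdW_superW_eq:
  assumes holo: "\<And>i j. i < N \<Longrightarrow> j < M \<Longrightarrow> (\<lambda>z. Z z i j) holomorphic_on UNIV"
  shows "gdet M (WdW N \<sigma> (superW \<theta>p \<eta> Z) z) = Rep_egrass (super_eval z (jet (\<lambda>z. cdet M (ZdZ N Z z)) z))"
proof -
  let ?W = "\<lambda>i k. super_eval z (jet (\<lambda>z. ZdZ N Z z i k) z)"
  have W: "WdW N \<sigma> (superW \<theta>p \<eta> Z) z i k = Rep_egrass (?W i k)" if "i < M" "k < M" for i k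
    using holo that by (intro WdW_superW_eq) auto
  have smooth: "smooth (\<lambda>z. ZdZ N Z z i k)" if "i < M" "k < M" for i k
    using holo that by (intro smooth_ZdZ) auto
  have "gscale (of_int (sign p)) (gprod_list (map (\<lambda>i. WdW N \<sigma> (superW \<theta>p \<eta> Z) z i (p i)) [0..<M]))
      = Rep_egrass (econst (of_int (sign p)) * (\<Prod>i<M. ?W i (p i)))" if "p permutes {0..<M}" for p
  proof -
    have map_eq: "map (\<lambda>i. WdW N \<sigma> (superW \<theta>p \<eta> Z) z i (p i)) [0..<M] = map (\<lambda>i. Rep_egrass (?W i (p i))) [0..<M]"
      using that by (intro map_cong) (auto simp: W permutes_atLeast0LessThan_less)
    have "gprod_list (map (\<lambda>i. WdW N \<sigma> (superW \<theta>p \<eta> Z) z i (p i)) [0..<M])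
        = Rep_egrass (\<Prod>i<M. ?W i (p i))"
      unfolding map_eq Rep_egrass_prod_list[symmetric]
      by (simp add: prod.distinct_set_conv_list[symmetric] atLeast0LessThan)
    then show ?thesis
      by (simp add: gscale_Rep_egrass)
  qed
  then have "gdet M (WdW N \<sigma> (superW \<theta>p \<eta> Z) z)
      = Rep_egrass (\<Sum>p\<in>{p. p permutes {0..<M}}. econst (of_int (sign p)) * (\<Prod>i<M. ?W i (p i)))"
    unfolding gdet_def by (simp add: Rep_egrass_sum finite_permutations gsum_def)
  also have "\<dots> = Rep_egrass (super_eval z (jet (\<lambda>z. cdet M (ZdZ N Z z)) z))"
    by (simp add: jet_cdet smooth super_eval.hom_sum super_eval.hom_mult super_eval.hom_prod super_eval_tconst)
  finally show ?thesis .
qed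

context
  fixes N M :: nat and Z :: "complex \<Rightarrow> nat \<Rightarrow> nat \<Rightarrow> complex"
  assumes Z_holo: "\<And>i j. i < N \<Longrightarrow> j < M \<Longrightarrow> (\<lambda>z. Z z i j) holomorphic_on UNIV"
    and Z_rank: "\<And>z. cdet M (ZdZ N Z z) \<noteq> 0"
begin

lemma smooth_cdet_ZdZ: "smooth (\<lambda>z. cdet M (ZdZ N Z z))"
  using Z_holo by (intro smooth_cdet smooth_ZdZ) auto

lemma gln_gdet_WdW_superW:
  "gln (gdet M (WdW N \<sigma> (superW \<theta>p \<eta> Z) z))
    = Rep_egrass (super_eval z (jet (\<lambda>z. Ln (cdet M (ZdZ N Z z))) z))"
proof -
  let ?D = "\<lambda>z. cdet M (ZdZ N Z z)"
  have "gln (gdet M (WdW N \<sigma> (superW \<theta>p \<eta> Z) z))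
      = gln (Rep_egrass (super_eval z (tpoly (?D z) (wirt_p ?D z) (wirt_m ?D z) (wirt_p (wirt_m ?D) z) * tfactor 0)))"
    using gdet_WdW_superW_eq[OF Z_holo, where z = z] by (simp add: jet_def tpoly_tfactor_0)
  also have "\<dots> = Rep_egrass (super_eval z (jet (\<lambda>z. Ln (?D z)) z))"
    by (simp add: gln_super_eval Z_rank jet_Ln_real smooth_cdet_ZdZ cdet_ZdZ_real econst.hom_zero)
  finally show ?thesis .
qed

lemma bos_metric_eq: "bos_metric N M Z = wirt_p (wirt_m (\<lambda>z. Ln (cdet M (ZdZ N Z z))))"
  unfolding bos_metric_def wirt_pm_def ..

lemma smooth_bos_metric: "smooth (bos_metric N M Z)"
  unfolding bos_metric_eq
  by (intro smooth_wirt smooth_Ln_real smooth_cdet_ZdZ cdet_ZdZ_real Z_rank)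

lemma bos_metric_real: "bos_metric N M Z z \<in> \<real>"
  unfolding bos_metric_eq by (intro wirt_pm_Ln_real smooth_cdet_ZdZ cdet_ZdZ_real Z_rank)

lemma susy_metric_superW:
  "susy_metric N M \<sigma> (superW \<theta>p \<eta> Z) z = Rep_egrass (super_eval z (jet (bos_metric N M Z) z * tfactor 1))"
proof -
  let ?F = "\<lambda>z. super_eval z (jet (\<lambda>z. Ln (cdet M (ZdZ N Z z))) z)"
  have "sd_m (\<lambda>z. gln (gdet M (WdW N \<sigma> (superW \<theta>p \<eta> Z) z))) = (\<lambda>z. Rep_egrass (esd_m ?F z))"
    unfolding gln_gdet_WdW_superW sd_Rep_egrass ..
  then have "susy_metric N M \<sigma> (superW \<theta>p \<eta> Z) z = sd_p (\<lambda>z. Rep_egrass (esd_m ?F z)) z"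
    unfolding susy_metric_def sd_pm_def by simp
  also have "\<dots> = Rep_egrass (esd_p (esd_m ?F) z)"
    by (rule sd_Rep_egrass)
  also have "\<dots> = Rep_egrass (super_eval z (jet (bos_metric N M Z) z * tfactor 1))"
    unfolding bos_metric_eq
    by (simp add: esd_super_eval_jet smooth_Ln_real smooth_cdet_ZdZ cdet_ZdZ_real Z_rank)
  finally show ?thesis .
qed

context
  assumes g_nonzero: "\<And>z. bos_metric N M Z z \<noteq> 0"
begin

lemma gln_susy_metric_superW:
  "gln (susy_metric N M \<sigma> (superW \<theta>p \<eta> Z) z)
    = Rep_egrass (super_eval z (jet (\<lambda>z. Ln (bos_metric N M Z z)) z) + (dshift_p z + dshift_m z))"
proof -
  let ?g = "bos_metric N M Z"
  have "gln (susy_metric N M \<sigma> (superW \<theta>p \<eta> Z) z)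
      = gln (Rep_egrass (super_eval z (tpoly (?g z) (wirt_p ?g z) (wirt_m ?g z) (wirt_p (wirt_m ?g) z) * tfactor 1)))"
    unfolding susy_metric_superW jet_def ..
  also have "\<dots> = Rep_egrass (super_eval z (jet (\<lambda>z. Ln (?g z)) z) + (dshift_p z + dshift_m z))"
    by (simp add: gln_super_eval g_nonzero jet_Ln_real smooth_bos_metric bos_metric_real econst.hom_one)
  finally show ?thesis .
qed

lemma sd_pm_gln_susy_metric_superW:
  "sd_pm (\<lambda>z. gln (susy_metric N M \<sigma> (superW \<theta>p \<eta> Z) z)) z
    = Rep_egrass (super_eval z (jet (wirt_pm (\<lambda>z. Ln (bos_metric N M Z z))) z * tfactor 1))"
proof -
  let ?F = "\<lambda>z. super_eval z (jet (\<lambda>z. Ln (bos_metric N M Z z)) z)"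
  have smooth: "smooth (\<lambda>z. Ln (bos_metric N M Z z))"
    by (intro smooth_Ln_real smooth_bos_metric bos_metric_real g_nonzero)
  have es: "esmooth ?F" "esmooth dshift_p" "esmooth dshift_m"
    using esmooth_super_eval_jet[OF smooth] eholomorphic_imp_esmooth[OF eholomorphic_dshift_p]
      eantiholomorphic_imp_esmooth[OF eantiholomorphic_dshift_m] .
  have "sd_pm (\<lambda>z. gln (susy_metric N M \<sigma> (superW \<theta>p \<eta> Z) z)) z
      = sd_p (\<lambda>z. Rep_egrass (esd_m (\<lambda>z. ?F z + (dshift_p z + dshift_m z)) z)) z"
    unfolding sd_pm_def gln_susy_metric_superW sd_Rep_egrass ..
  also have "\<dots> = Rep_egrass (esd_p (esd_m (\<lambda>z. ?F z + (dshift_p z + dshift_m z))) z)"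
    by (rule sd_Rep_egrass)
  also have "esd_m (\<lambda>z. ?F z + (dshift_p z + dshift_m z)) = (\<lambda>z. esd_m ?F z + esd_m dshift_m z)"
    using es by (simp add: fun_eq_iff esd_add esmooth_add eholomorphic_esd eholomorphic_dshift_p)
  also have "esd_p (\<lambda>z. esd_m ?F z + esd_m dshift_m z) z = esd_p (esd_m ?F) z"
    using es by (simp add: esd_add esmooth_esd eantiholomorphic_esd eantiholomorphic_dshift_m)
  also have "\<dots> = super_eval z (jet (wirt_p (wirt_m (\<lambda>z. Ln (bos_metric N M Z z)))) z * tfactor 1)"
    by (rule esd_super_eval_jet[OF smooth])
  finally show ?thesis
    by (simp add: wirt_pm_def)
qed

lemma susy_curv_superW:
  assumes kappa_const: "\<And>z. bos_curv N M Z z = c"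
  shows "susy_curv N M \<sigma> (superW \<theta>p \<eta> Z) z = gconst c"
proof -
  let ?g = "bos_metric N M Z"
  have "wirt_pm (\<lambda>z. Ln (?g z)) w = - c * ?g w" for w
  proof -
    have "- wirt_pm (\<lambda>z. Ln (?g z)) w = c * ?g w"
      using kappa_const[of w] g_nonzero[of w] unfolding bos_curv_def by (simp add: field_simps)
    then show ?thesis
      by (metis minus_minus mult_minus_left)
  qed
  then have "wirt_pm (\<lambda>z. Ln (?g z)) = (\<lambda>z. - c * ?g z)" ..
  then have "sd_pm (\<lambda>z. gln (susy_metric N M \<sigma> (superW \<theta>p \<eta> Z) z)) z
      = Rep_egrass (super_eval z (jet (\<lambda>z. - c * ?g z) z * tfactor 1))"
    by (simp only: sd_pm_gln_susy_metric_superW)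
  also have "\<dots> = gscale (- c) (susy_metric N M \<sigma> (superW \<theta>p \<eta> Z) z)"
    unfolding jet_cmult[OF smooth_bos_metric] super_eval.hom_mult super_eval_tconst
    by (simp add: susy_metric_superW gscale_Rep_egrass super_eval.hom_mult mult.assoc)
  finally have sd_pm: "sd_pm (\<lambda>z. gln (susy_metric N M \<sigma> (superW \<theta>p \<eta> Z) z)) z
      = gscale (- c) (susy_metric N M \<sigma> (superW \<theta>p \<eta> Z) z)" .
  have "gmul (ginv (susy_metric N M \<sigma> (superW \<theta>p \<eta> Z) z)) (susy_metric N M \<sigma> (superW \<theta>p \<eta> Z) z)
      = gconst 1"
    unfolding susy_metric_superW
    by (rule ginv_super_eval) (use g_nonzero[of z] in \<open>simp add: jet_def tpoly_def tfactor_def\<close>)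
  then show ?thesis
    unfolding susy_curv_def sd_pm gmul_gscale_right by (simp add: gscale_def gconst_def fun_eq_iff)
qed

end

end

end

theorem theorem1:
  fixes N M :: nat
    and Z :: "complex \<Rightarrow> nat \<Rightarrow> nat \<Rightarrow> complex"
    and \<theta>p \<theta>m :: "'g::{finite,linorder}"
    and \<sigma> :: "'g \<Rightarrow> 'g"
    and \<eta> :: "complex \<Rightarrow> 'g grass"
    and c :: complex
  assumes Z_holo: "\<And>i j. i < N \<Longrightarrow> j < M \<Longrightarrow> (\<lambda>z. Z z i j) holomorphic_on UNIV"
    and Z_rank: "\<And>z. cdet M (ZdZ N Z z) \<noteq> 0"
    and g_nonzero: "\<And>z. bos_metric N M Z z \<noteq> 0"
    and kappa_const: "\<And>z. bos_curv N M Z z = c"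
    and theta_distinct: "\<theta>p \<noteq> \<theta>m"
    and sigma_inv: "\<And>a. \<sigma> (\<sigma> a) = a"
    and sigma_theta: "\<sigma> \<theta>p = \<theta>m"
    and eta_holo: "\<And>S. (\<lambda>z. \<eta> z S) holomorphic_on UNIV"
    and eta_odd: "\<And>z S. \<eta> z S \<noteq> 0 \<Longrightarrow> odd (card S)"
    and eta_no_theta: "\<And>z S. \<eta> z S \<noteq> 0 \<Longrightarrow> \<theta>p \<notin> S \<and> \<theta>m \<notin> S"
  shows "\<forall>z. susy_curv N M \<sigma> (superW \<theta>p \<eta> Z) z = gconst c"
proof
  fix z
  interpret susy_extension \<theta>p \<theta>m \<sigma> \<eta>
    using theta_distinct sigma_inv sigma_theta eta_holo eta_odd by unfold_locales
  show "susy_curv N M \<sigma> (superW \<theta>p \<eta> Z) z = gconst c"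
    using susy_curv_superW[OF Z_holo Z_rank g_nonzero kappa_const] .
qed

end
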